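(* For every $n\in\mathbb{N}$, $$\sum_{|\lambda|=n}\ \sum_{\pi\in S_\lambda}q^{\mathrm{maj}(\pi)}t^{\mathrm{des}(\pi)}\,m_\lambda=\sum_{|\nu|=n}\ \sum_{T\in\mathrm{QYT}(\nu)}q^{\mathrm{maj}(T)}t^{\mathrm{des}(T)}\,s_\nu.$$
   Context: $m_\lambda$ and $s_\nu$ are the monomial symmetric and Schur functions. $S_\lambda$ is the set of multiset permutations (words) of $\{1^{\lambda_1},2^{\lambda_2},\dots\}$; for a word $\pi$, $\mathrm{Des}(\pi)=\{i:\pi_i>\pi_{i+1}\}$, $\mathrm{des}(\pi)=|\mathrm{Des}(\pi)|$, $\mathrm{maj}(\pi)=\sum_{i\in\mathrm{Des}(\pi)}i$. Tableaux are in French convention. For a standard Young tableau $T$, $\mathrm{Des}(T)=\{i: i+1$ lies in a strictly higher row than $i\}$, with $\mathrm{des},\mathrm{maj}$ as for words. A quasi-Yamanouchi tableau (QYT) is a semistandard Young tableau such that whenever an entry $i\ge2$ appears, some instance of $i$ lies in a strictly higher row than some instance of $i-1$; $\mathrm{QYT}(\nu)$ is the set of QYT of shape $\nu$. Standardization (replace the $1$'s by $1,2,\dots$ left to right, then the $2$'s by the next integers left to right, etc.) is a bijection from $\mathrm{QYT}(\nu)$ to standard Young tableaux of shape $\nu$; $\mathrm{maj},\mathrm{des}$ of a QYT are those of its standardization. *)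

theory Defs
  imports Main "HOL-Library.Multiset"
begin

text \<open>Partitions are lists of positive integers in weakly decreasing order
  (lambda_1 = lambda ! 0). Variables are x_1, ..., x_N, i.e. x :: nat => 'a at 1..N.\<close>

definition partitions :: "nat \<Rightarrow> nat list set" where
  "partitions n = {lam. sum_list lam = n \<and> sorted_wrt (\<ge>) lam \<and> 0 \<notin> set lam}"

definition words :: "nat list \<Rightarrow> nat list set" where
  "words lam = {w. length w = sum_list lam \<and> set w \<subseteq> {1..length lam} \<and>
       (\<forall>i<length lam. count_list w (Suc i) = lam ! i)}"

text \<open>Descent set of a word, positions 1-indexed.\<close>
definition word_Des :: "nat list \<Rightarrow> nat set" where
  "word_Des w = {i. 1 \<le> i \<and> i < length w \<and> w ! (i - 1) > w ! i}"

definition word_des :: "nat list \<Rightarrow> nat" where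
  "word_des w = card (word_Des w)"

definition word_maj :: "nat list \<Rightarrow> nat" where
  "word_maj w = \<Sum>(word_Des w)"

definition monomial_sym :: "nat \<Rightarrow> nat list \<Rightarrow> (nat \<Rightarrow> 'a::comm_ring_1) \<Rightarrow> 'a" where
  "monomial_sym N lam x =
     (\<Sum>\<alpha> \<in> {\<alpha>. (\<forall>i. i \<notin> {1..N} \<longrightarrow> \<alpha> i = 0) \<and>
                 mset (filter (\<lambda>k. k \<noteq> 0) (map \<alpha> [1..<Suc N])) = mset lam}.
        \<Prod>i\<in>{1..N}. x i ^ \<alpha> i)"

text \<open>Young diagram in French convention: row r (r = 0 bottom) has lambda ! r cells;
  a cell (r,c) lies in a higher row than (r',c') iff r > r'.\<close>
definition cells :: "nat list \<Rightarrow> (nat \<times> nat) set" where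
  "cells nu = {(r, c). r < length nu \<and> c < nu ! r}"

definition ssyt :: "nat list \<Rightarrow> (nat \<times> nat \<Rightarrow> nat) \<Rightarrow> bool" where
  "ssyt nu T \<longleftrightarrow>
     (\<forall>p. p \<notin> cells nu \<longrightarrow> T p = 0) \<and>
     (\<forall>p\<in>cells nu. 1 \<le> T p) \<and>
     (\<forall>r c. (r, c) \<in> cells nu \<and> (r, Suc c) \<in> cells nu \<longrightarrow> T (r, c) \<le> T (r, Suc c)) \<and>
     (\<forall>r c. (r, c) \<in> cells nu \<and> (Suc r, c) \<in> cells nu \<longrightarrow> T (r, c) < T (Suc r, c))"

definition schur :: "nat \<Rightarrow> nat list \<Rightarrow> (nat \<Rightarrow> 'a::comm_ring_1) \<Rightarrow> 'a" where
  "schur N nu x =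
     (\<Sum>T \<in> {T. ssyt nu T \<and> (\<forall>p\<in>cells nu. T p \<le> N)}. \<Prod>p\<in>cells nu. x (T p))"

definition qyt :: "nat list \<Rightarrow> (nat \<times> nat \<Rightarrow> nat) \<Rightarrow> bool" where
  "qyt nu T \<longleftrightarrow> ssyt nu T \<and>
     (\<forall>p\<in>cells nu. 2 \<le> T p \<longrightarrow>
        (\<exists>p1\<in>cells nu. \<exists>p2\<in>cells nu. T p1 = T p \<and> T p2 = T p - 1 \<and> fst p1 > fst p2))"

definition QYT :: "nat list \<Rightarrow> (nat \<times> nat \<Rightarrow> nat) set" where
  "QYT nu = {T. qyt nu T}"

text \<open>Standardization: the 1's become 1,2,... from left to right, then the 2's, etc.\<close>
definition standardize :: "nat list \<Rightarrow> (nat \<times> nat \<Rightarrow> nat) \<Rightarrow> (nat \<times> nat \<Rightarrow> nat)" where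
  "standardize nu T = (\<lambda>(r, c). if (r, c) \<in> cells nu then
       card {p\<in>cells nu. T p < T (r, c)} +
       card {p\<in>cells nu. T p = T (r, c) \<and> snd p < c} + 1
     else 0)"

definition syt_Des :: "nat list \<Rightarrow> (nat \<times> nat \<Rightarrow> nat) \<Rightarrow> nat set" where
  "syt_Des nu S = {i. 1 \<le> i \<and> i < card (cells nu) \<and>
      (\<exists>p1\<in>cells nu. \<exists>p2\<in>cells nu. S p1 = i \<and> S p2 = Suc i \<and> fst p2 > fst p1)}"

definition tab_des :: "nat list \<Rightarrow> (nat \<times> nat \<Rightarrow> nat) \<Rightarrow> nat" where
  "tab_des nu T = card (syt_Des nu (standardize nu T))"

definition tab_maj :: "nat list \<Rightarrow> (nat \<times> nat \<Rightarrow> nat) \<Rightarrow> nat" where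
  "tab_maj nu T = \<Sum>(syt_Des nu (standardize nu T))"

end

theory Submission
  imports Defs
begin

(* Both sides equal the sum of q^maj(w) t^des(w) x_w over all words w of length n in the letters
   1..N.  On the left this rests on the fact that the joint distribution of (maj, des) over the
   rearrangements of a multiset depends only on the multiplicities, not on which letters carry
   them; an involution that exchanges the multiplicities of two adjacent letters a, a+1 while
   preserving all descents shows this.  On the right, insert the letters of w one by one by
   Schensted row insertion.  By the row bumping lemma, step i+1 creates its cell in a strictly
   higher row than step i exactly when the letter inserted at step i+1 is smaller, so the descents
   of the insertion sequence are the ascents of the sequence of rows of the new cells.  These row
   sequences (Yamanouchi words) of shape nu correspond bijectively to the QYT of shape nu: fill the
   cell created at each step with one plus the number of earlier ascents; the standardization of
   this QYT is the standard recording tableau.  RSK is a bijection onto pairs (P, recording word)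
   of equal shape with P semistandard of the same content as w, and summing over P gives s_nu. *)

section \<open>Schensted insertion\<close>

fun row_ins :: "nat \<Rightarrow> nat list \<Rightarrow> nat option \<times> nat list" where
  "row_ins x [] = (None, [x])"
| "row_ins x (a # r) = (if x < a then (Some a, x # r)
     else (case row_ins x r of (ob, r') \<Rightarrow> (ob, a # r')))"

lemma row_ins_None: "row_ins x r = (None, r') \<Longrightarrow> r' = r @ [x] \<and> (\<forall>a\<in>set r. a \<le> x)"
  by (induction r arbitrary: r') (auto split: if_splits prod.splits)

lemma row_ins_append: "\<forall>a\<in>set r. a \<le> x \<Longrightarrow> row_ins x r = (None, r @ [x])"
  by (induction r) auto

lemma row_ins_Some: "row_ins x r = (Some y, r') \<Longrightarrow>
   x < y \<and> length r' = length r \<and> y \<in> set r \<and> r' \<noteq> [] \<and> hd r' \<le> x"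
  by (induction r arbitrary: r') (auto split: if_splits prod.splits)

lemma row_ins_Some_nth_le: "row_ins x r = (Some y, r') \<Longrightarrow> i < length r \<Longrightarrow> r' ! i \<le> r ! i"
  by (induction r arbitrary: r' i) (auto split: if_splits prod.splits simp: nth_Cons')

lemma set_row_ins: "set (snd (row_ins x r)) \<subseteq> insert x (set r)"
  by (induction r) (auto split: prod.splits)

lemma sorted_row_ins: "sorted r \<Longrightarrow> sorted (snd (row_ins x r))"
proof (induction r)
  case Nil then show ?case by simp
next
  case (Cons a r)
  show ?case
  proof (cases "x < a")
    case True with Cons.prems show ?thesis by auto
  next
    case False
    have "set (snd (row_ins x r)) \<subseteq> insert x (set r)" by (rule set_row_ins)
    with False Cons show ?thesis by (auto split: prod.splits)
  qed
qed

lemma mset_row_ins: "row_ins x r = (ob, r') \<Longrightarrow>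
   mset r' + (case ob of None \<Rightarrow> {#} | Some y \<Rightarrow> {#y#}) = add_mset x (mset r)"
  by (induction r arbitrary: ob r') (auto split: if_splits prod.splits option.splits)

definition col_strict :: "nat list \<Rightarrow> nat list \<Rightarrow> bool" where
  "col_strict b r \<longleftrightarrow> length r \<le> length b \<and> (\<forall>i<length r. b ! i < r ! i)"

lemma col_strict_Nil2[simp]: "col_strict b []" by (simp add: col_strict_def)
lemma col_strict_Nil1[simp]: "col_strict [] (y # r) = False" by (simp add: col_strict_def)
lemma col_strict_Cons[simp]: "col_strict (x # b) (y # r) = (x < y \<and> col_strict b r)"
  unfolding col_strict_def by (simp add: All_less_Suc2) blast

lemma col_strict_mono: "col_strict b r \<Longrightarrow> length b' = length b \<Longrightarrow> (\<forall>i<length b. b' ! i \<le> b ! i) \<Longrightarrow> col_strict b' r"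
  unfolding col_strict_def
proof (intro conjI allI impI)
  fix i assume "length r \<le> length b \<and> (\<forall>i<length r. b ! i < r ! i)"
    and "\<forall>i<length b. b' ! i \<le> b ! i" and "i < length r"
  then show "b' ! i < r ! i" by (meson order.strict_trans1 order.strict_trans2)
qed auto

lemma col_strict_snoc: "col_strict b r \<Longrightarrow> col_strict (b @ [x]) r"
  unfolding col_strict_def by (auto simp: nth_append)

lemma col_strict_row_ins_bumped: "sorted b \<Longrightarrow> row_ins x b = (Some y, b') \<Longrightarrow> col_strict b r \<Longrightarrow>
   col_strict b' (snd (row_ins y r))"
proof (induction b arbitrary: b' r)
  case Nil then show ?case by simp
next
  case (Cons a b)
  show ?case
  proof (cases "x < a")
    case True
    with Cons.prems show ?thesis by (cases r) auto
  next
    case False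
    with Cons.prems obtain b1 where b1: "row_ins x b = (Some y, b1)" "b' = a # b1"
      by (auto split: prod.splits)
    show ?thesis
    proof (cases r)
      case Nil
      with False b1 row_ins_Some[OF b1(1)] show ?thesis by simp
    next
      case r: (Cons c r1)
      have "col_strict b r1" using Cons.prems(3) r by simp
      then have "col_strict b1 r1"
        using col_strict_mono row_ins_Some[OF b1(1)] row_ins_Some_nth_le[OF b1(1)] by blast
      moreover have "col_strict b1 (snd (row_ins y r1))"
        using Cons.IH[OF _ b1(1) \<open>col_strict b r1\<close>] Cons.prems(1) by simp
      moreover have "a < c" using Cons.prems(3) r by simp
      ultimately show ?thesis using False r b1 row_ins_Some[OF b1(1)] by (auto split: prod.splits)
    qed
  qed
qed

(* A tableau is the list of its rows, bottom row first (French convention); col_strict b r says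
   that row r may sit directly on top of row b. The second component of tab_ins x T is the index
   of the row in which the new cell appears. *)
fun tab_ins :: "nat \<Rightarrow> nat list list \<Rightarrow> nat list list \<times> nat" where
  "tab_ins x [] = ([[x]], 0)"
| "tab_ins x (r # rs) = (case row_ins x r of
      (None, r') \<Rightarrow> (r' # rs, 0)
    | (Some y, r') \<Rightarrow> (case tab_ins y rs of (rs', k) \<Rightarrow> (r' # rs', Suc k)))"

fun ssyt_rows :: "nat list list \<Rightarrow> bool" where
  "ssyt_rows [] = True"
| "ssyt_rows (r # rs) = (r \<noteq> [] \<and> sorted r \<and> ssyt_rows rs \<and> (case rs of [] \<Rightarrow> True | r2 # _ \<Rightarrow> col_strict r r2))"

lemma ssyt_rows_tab_ins: "ssyt_rows T \<Longrightarrow> ssyt_rows (fst (tab_ins x T))"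
proof (induction T arbitrary: x)
  case Nil then show ?case by simp
next
  case (Cons r rs)
  obtain ob r' where ins: "row_ins x r = (ob, r')" by fastforce
  have "sorted r'" using sorted_row_ins[of r x] Cons.prems ins by simp
  show ?case
  proof (cases ob)
    case None
    then have "r' = r @ [x]" using ins row_ins_None by blast
    then show ?thesis using Cons.prems ins None \<open>sorted r'\<close>
      by (auto simp: col_strict_snoc split: list.splits)
  next
    case (Some y)
    then have bump: "row_ins x r = (Some y, r')" using ins by simp
    have top: "case fst (tab_ins y rs) of [] \<Rightarrow> True | r2 # _ \<Rightarrow> col_strict r' r2"
    proof (cases rs)
      case Nil
      then show ?thesis using row_ins_Some[OF bump] by (cases r') auto
    next
      case (Cons r2 rs2)
      then have "col_strict r' (snd (row_ins y r2))"
        using col_strict_row_ins_bumped[OF _ bump] Cons.prems by simp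
      then show ?thesis using Cons by (cases "row_ins y r2") (auto split: option.splits prod.splits)
    qed
    have "fst (tab_ins x (r # rs)) = r' # fst (tab_ins y rs)"
      using bump by (simp split: prod.splits)
    then show ?thesis
      using \<open>sorted r'\<close> row_ins_Some[OF bump] Cons.IH Cons.prems top by simp
  qed
qed

definition add_cell :: "nat list \<Rightarrow> nat \<Rightarrow> nat list" where
  "add_cell sh k = (if k < length sh then sh[k := Suc (sh ! k)] else sh @ [1])"

lemma add_cell_Cons_Suc[simp]: "add_cell (a # sh) (Suc k) = a # add_cell sh k"
  by (simp add: add_cell_def)
lemma add_cell_Cons_0[simp]: "add_cell (a # sh) 0 = Suc a # sh"
  by (simp add: add_cell_def)
lemma add_cell_Nil[simp]: "add_cell [] k = [1]"
  by (simp add: add_cell_def)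

definition is_partition :: "nat list \<Rightarrow> bool" where
  "is_partition nu \<longleftrightarrow> sorted_wrt (\<ge>) nu \<and> 0 \<notin> set nu"

lemma partitions_iff: "nu \<in> partitions n \<longleftrightarrow> sum_list nu = n \<and> is_partition nu"
  by (auto simp: partitions_def is_partition_def)

lemma partition_nth_antimono: "is_partition nu \<Longrightarrow> r1 \<le> r2 \<Longrightarrow> r2 < length nu \<Longrightarrow> nu ! r2 \<le> nu ! r1"
  unfolding is_partition_def by (cases "r1 = r2") (auto simp: sorted_wrt_iff_nth_less)

lemma partition_nth_pos: "is_partition nu \<Longrightarrow> i < length nu \<Longrightarrow> 0 < nu ! i"
  unfolding is_partition_def by (metis gr0I nth_mem)

lemma shape_tab_ins: "map length (fst (tab_ins x T)) = add_cell (map length T) (snd (tab_ins x T)) \<and>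
    snd (tab_ins x T) \<le> length T"
proof (induction T arbitrary: x)
  case Nil then show ?case by simp
next
  case (Cons r rs)
  show ?case
  proof (cases "row_ins x r")
    case (Pair ob r')
    show ?thesis
    proof (cases ob)
      case None
      with Pair have "r' = r @ [x]" using row_ins_None by auto
      with Pair None show ?thesis by auto
    next
      case (Some y)
      with Pair row_ins_Some[of x r y r'] Cons.IH[of y] show ?thesis
        by (auto split: prod.splits)
    qed
  qed
qed

lemma mset_tab_ins: "mset (concat (fst (tab_ins x T))) = add_mset x (mset (concat T))"
proof (induction T arbitrary: x)
  case Nil then show ?case by simp
next
  case (Cons r rs)
  show ?case
  proof (cases "row_ins x r")
    case (Pair ob r')
    note m = mset_row_ins[OF Pair]
    show ?thesis
    proof (cases ob)
      case None
      with Pair m show ?thesis by auto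
    next
      case (Some y)
      with Pair m Cons.IH[of y] show ?thesis
        by (auto split: prod.splits)
    qed
  qed
qed

section \<open>Reverse insertion\<close>

fun row_unins :: "nat \<Rightarrow> nat list \<Rightarrow> nat \<times> nat list" where
  "row_unins z [] = (0, [])"
| "row_unins z (a # r) = (if r \<noteq> [] \<and> hd r < z then (case row_unins z r of (x, r') \<Rightarrow> (x, a # r'))
     else (a, z # r))"

fun tab_unins :: "nat list list \<Rightarrow> nat \<Rightarrow> nat \<times> nat list list" where
  "tab_unins [] k = (0, [])"
| "tab_unins (r # rs) 0 = (last r, if butlast r = [] then rs else butlast r # rs)"
| "tab_unins (r # rs) (Suc k) = (case tab_unins rs k of (z, rs') \<Rightarrow> (case row_unins z r of (x, r') \<Rightarrow> (x, r' # rs')))"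

lemma sorted_hd_le: "sorted (a # r) \<Longrightarrow> r \<noteq> [] \<Longrightarrow> a \<le> hd r"
  by (cases r) auto

lemma row_unins_row_ins: "sorted r \<Longrightarrow> row_ins x r = (Some y, r') \<Longrightarrow> row_unins y r' = (x, r)"
proof (induction r arbitrary: r')
  case Nil then show ?case by simp
next
  case (Cons a r)
  show ?case
  proof (cases "x < a")
    case True
    with Cons.prems have e: "y = a" "r' = x # r" by auto
    have nc: "\<not> (r \<noteq> [] \<and> hd r < a)" using sorted_hd_le[OF Cons.prems(1)] by auto
    have "row_unins a (x # r) = (x, a # r)" unfolding row_unins.simps if_not_P[OF nc] by simp
    with e show ?thesis by simp
  next
    case False
    with Cons.prems obtain r1 where r1: "row_ins x r = (Some y, r1)" "r' = a # r1"
      by (auto split: prod.splits)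
    from row_ins_Some[OF r1(1)] have c: "r1 \<noteq> [] \<and> hd r1 < y" by auto
    have "row_unins y r1 = (x, r)" using Cons.IH[OF _ r1(1)] Cons.prems(1) by simp
    with c r1(2) show ?thesis by simp
  qed
qed

lemma row_unins_eq: "sorted r \<Longrightarrow> r \<noteq> [] \<Longrightarrow> hd r < z \<Longrightarrow> row_unins z r = (x, r') \<Longrightarrow>
  \<exists>i<length r. x = r ! i \<and> r' = r[i := z] \<and> r ! i < z \<and> (\<forall>c. i < c \<and> c < length r \<longrightarrow> z \<le> r ! c)"
proof (induction r arbitrary: x r')
  case Nil then show ?case by simp
next
  case (Cons a r1)
  show ?case
  proof (cases "r1 \<noteq> [] \<and> hd r1 < z")
    case True
    then obtain x1 r1' where u: "row_unins z r1 = (x1, r1')" "x = x1" "r' = a # r1'"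
      using Cons.prems by (auto split: prod.splits)
    from Cons.IH[OF _ _ _ u(1)] True Cons.prems(1)
    obtain i where i: "i < length r1" "x1 = r1 ! i" "r1' = r1[i := z]" "r1 ! i < z"
      "\<forall>c. i < c \<and> c < length r1 \<longrightarrow> z \<le> r1 ! c" by auto
    show ?thesis
    proof (rule exI[of _ "Suc i"], intro conjI allI impI)
      fix c assume "Suc i < c \<and> c < length (a # r1)"
      then obtain c' where "c = Suc c'" "i < c'" "c' < length r1" by (cases c) auto
      with i show "z \<le> (a # r1) ! c" by simp
    qed (use i u in auto)
  next
    case False
    with Cons.prems have u: "x = a" "r' = z # r1" by auto
    show ?thesis
    proof (rule exI[of _ 0], intro conjI allI impI)
      fix c assume c: "0 < c \<and> c < length (a # r1)"
      then obtain c' where c': "c = Suc c'" "c' < length r1" by (cases c) auto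
      then have "r1 \<noteq> []" by auto
      with False have "z \<le> hd r1" by auto
      also have "hd r1 = r1 ! 0" using \<open>r1 \<noteq> []\<close> by (simp add: hd_conv_nth)
      also have "r1 ! 0 \<le> r1 ! c'" using Cons.prems(1) c' by (simp add: sorted_nth_mono)
      finally show "z \<le> (a # r1) ! c" using c' by simp
    qed (use u Cons.prems in auto)
  qed
qed

lemma fst_row_unins_mem: "r \<noteq> [] \<Longrightarrow> fst (row_unins z r) \<in> set r"
  by (induction r) (auto split: prod.splits)

lemma row_ins_row_unins: "sorted r \<Longrightarrow> r \<noteq> [] \<Longrightarrow> hd r < z \<Longrightarrow> row_unins z r = (x, r') \<Longrightarrow>
   row_ins x r' = (Some z, r)"
proof (induction r arbitrary: x r')
  case Nil then show ?case by simp
next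
  case (Cons a r1)
  show ?case
  proof (cases "r1 \<noteq> [] \<and> hd r1 < z")
    case True
    then obtain r1' where u: "row_unins z r1 = (x, r1')" "r' = a # r1'"
      using Cons.prems by (auto split: prod.splits)
    have "x \<in> set r1" using fst_row_unins_mem[of r1 z] u True by simp
    then have "a \<le> x" using Cons.prems(1) by auto
    moreover have "row_ins x r1' = (Some z, r1)" using Cons.IH[OF _ _ _ u(1)] True Cons.prems(1) by auto
    ultimately show ?thesis using u by auto
  next
    case False
    with Cons.prems have u: "x = a" "r' = z # r1" by auto
    with Cons.prems show ?thesis by simp
  qed
qed

lemma sorted_row_unins: "sorted r \<Longrightarrow> r \<noteq> [] \<Longrightarrow> hd r < z \<Longrightarrow> row_unins z r = (x, r') \<Longrightarrow> sorted r'"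
proof -
  assume a: "sorted r" "r \<noteq> []" "hd r < z" "row_unins z r = (x, r')"
  from row_unins_eq[OF a] obtain i where i: "i<length r" "x = r ! i" "r' = r[i := z]" "r ! i < z"
    "\<forall>c. i < c \<and> c < length r \<longrightarrow> z \<le> r ! c" by blast
  show "sorted r'"
    unfolding sorted_iff_nth_mono
  proof (intro allI impI)
    fix p q assume pq: "p \<le> q" "q < length r'"
    have s: "\<And>p q. p \<le> q \<Longrightarrow> q < length r \<Longrightarrow> r ! p \<le> r ! q" using a(1) by (simp add: sorted_nth_mono)
    show "r' ! p \<le> r' ! q"
      using pq i s[of p q] s[of p i] by (cases "p = i"; cases "q = i") (auto simp: nth_list_update)
  qed
qed

(* Invariant of reverse bumping: the entry z at position i of row r was ejected, leaving r'.
   It makes the reverse bump in the row below keep the columns strict. *)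
definition ejects :: "nat list \<Rightarrow> nat list \<Rightarrow> nat \<Rightarrow> bool" where
  "ejects r r' z \<longleftrightarrow> (\<exists>i<length r. z = r ! i \<and> length r' \<le> length r \<and>
     (\<forall>c<length r'. r ! c \<le> r' ! c) \<and> (\<forall>c. i \<le> c \<and> c < length r' \<longrightarrow> z < r' ! c))"

lemma ejects_row_unins:
  assumes "sorted b" "b \<noteq> []" "hd b < z" and u: "row_unins z b = (x, b')"
  shows "ejects b b' x"
proof -
  from row_unins_eq[OF assms] obtain i where i: "i < length b" "x = b ! i"
    "b' = b[i := z]" "b ! i < z" "\<forall>c. i < c \<and> c < length b \<longrightarrow> z \<le> b ! c" by blast
  show ?thesis
    unfolding ejects_def
  proof (rule exI[of _ i], intro conjI allI impI)
    fix c assume "i \<le> c \<and> c < length b'"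
    then show "x < b' ! c" using i by (cases "c = i") (auto intro: less_le_trans)
  qed (use i in \<open>auto simp: nth_list_update\<close>)
qed

lemma col_strict_row_unins:
  assumes sb: "sorted b" and ne: "b \<noteq> []" and ab: "col_strict b r" and rs: "ejects r r' z"
    and u: "row_unins z b = (x, b')"
  shows "hd b < z \<and> col_strict b' r'"
proof -
  from rs obtain i where i: "i < length r" "z = r ! i" "length r' \<le> length r"
    "\<forall>c<length r'. r ! c \<le> r' ! c" "\<forall>c. i \<le> c \<and> c < length r' \<longrightarrow> z < r' ! c"
    unfolding ejects_def by blast
  from ab have lb: "length r \<le> length b" and lt: "\<forall>c<length r. b ! c < r ! c"
    unfolding col_strict_def by auto
  have bi: "b ! i < z" using lt i by auto
  have "hd b = b ! 0" using ne by (simp add: hd_conv_nth)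
  also have "b ! 0 \<le> b ! i" using sb i lb by (simp add: sorted_nth_mono)
  finally have hb: "hd b < z" using bi by simp
  from row_unins_eq[OF sb ne hb u] obtain i0 where i0: "i0 < length b"
    "b' = b[i0 := z]" "\<forall>c. i0 < c \<and> c < length b \<longrightarrow> z \<le> b ! c" by blast
  have "i \<le> i0" using i0(3) i lb bi by (meson leI less_le_trans not_le)
  have "b' ! c < r' ! c" if c: "c < length r'" for c
  proof (cases "c = i0")
    case True
    then show ?thesis using i0 i(5) \<open>i \<le> i0\<close> c by simp
  next
    case False
    then have "b' ! c = b ! c" using i0 by simp
    also have "b ! c < r ! c" using lt c i by simp
    also have "r ! c \<le> r' ! c" using i(4) c by simp
    finally show ?thesis .
  qed
  then show ?thesis using hb i0 i lb by (simp add: col_strict_def)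
qed

definition is_corner :: "nat list list \<Rightarrow> nat \<Rightarrow> bool" where
  "is_corner T k \<longleftrightarrow> k < length T \<and> (Suc k = length T \<or> length (T ! Suc k) < length (T ! k))"

definition first_row :: "nat list list \<Rightarrow> nat list" where
  "first_row T = (case T of [] \<Rightarrow> [] | r # _ \<Rightarrow> r)"

lemma col_strict_butlast: "col_strict r r2 \<Longrightarrow> length r2 < length r \<Longrightarrow> col_strict (butlast r) r2"
  unfolding col_strict_def by (auto simp: nth_butlast)

lemma ejects_butlast: "r \<noteq> [] \<Longrightarrow> ejects r (butlast r) (last r)"
  unfolding ejects_def
  by (rule exI[of _ "length r - 1"]) (auto simp: last_conv_nth nth_butlast)

lemma tab_ins_tab_unins_0:
  assumes T: "ssyt_rows (r # rs)" and corner: "is_corner (r # rs) 0"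
    and un: "tab_unins (r # rs) 0 = (x, T0)"
  shows "ssyt_rows T0 \<and> tab_ins x T0 = (r # rs, 0) \<and> ejects r (first_row T0) x"
proof -
  have x: "x = last r" and T0: "T0 = (if butlast r = [] then rs else butlast r # rs)"
    using un by auto
  have "r \<noteq> []" and "sorted r" using T by auto
  then have r: "r = butlast r @ [x]" and "\<forall>a\<in>set (butlast r). a \<le> x"
    using x sorted_append[of "butlast r" "[x]"] by auto
  then have ins: "row_ins x (butlast r) = (None, r)" using row_ins_append by metis
  show ?thesis
  proof (cases "butlast r = []")
    case True
    have "rs = []"
    proof (rule ccontr)
      assume "rs \<noteq> []"
      then obtain r2 rs2 where "rs = r2 # rs2" by (cases rs) auto
      then show False using corner T True r by (auto simp: is_corner_def)
    qed
    then show ?thesis using T0 True r x ejects_butlast[OF \<open>r \<noteq> []\<close>] by (simp add: first_row_def)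
  next
    case False
    have "col_strict (butlast r) r2" if "rs = r2 # rs2" for r2 rs2
      using col_strict_butlast T corner that by (simp add: is_corner_def)
    moreover have "sorted (butlast r)" using \<open>sorted r\<close> by (rule sorted_butlast)
    ultimately have "ssyt_rows T0"
      using T0 False T by (cases rs) auto
    then show ?thesis
      using T0 False ins x ejects_butlast[OF \<open>r \<noteq> []\<close>] by (simp add: first_row_def)
  qed
qed

lemma tab_ins_tab_unins: "ssyt_rows T \<Longrightarrow> is_corner T k \<Longrightarrow> tab_unins T k = (x, T0) \<Longrightarrow>
  ssyt_rows T0 \<and> tab_ins x T0 = (T, k) \<and> ejects (hd T) (first_row T0) x"
proof (induction T arbitrary: k x T0)
  case Nil then show ?case by (simp add: is_corner_def)
next
  case (Cons r rs)
  show ?case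
  proof (cases k)
    case 0
    with tab_ins_tab_unins_0[of r rs x T0] Cons.prems show ?thesis by (simp del: tab_unins.simps)
  next
    case (Suc k')
    obtain z rs0 where u1: "tab_unins rs k' = (z, rs0)" by fastforce
    obtain x' r0 where u2: "row_unins z r = (x', r0)" by fastforce
    have e: "x = x'" "T0 = r0 # rs0" using Cons.prems(3) Suc u1 u2 by auto
    have cr: "is_corner rs k'" using Cons.prems(2) Suc by (simp add: is_corner_def)
    have srs: "ssyt_rows rs" using Cons.prems(1) by simp
    from Cons.IH[OF srs cr u1] have IH: "ssyt_rows rs0" "tab_ins z rs0 = (rs, k')" "ejects (hd rs) (first_row rs0) z"
      by auto
    have rsne: "rs \<noteq> []" using cr by (auto simp: is_corner_def)
    then obtain r2 rs2 where rs: "rs = r2 # rs2" by (cases rs) auto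
    have ab: "col_strict r r2" and sr: "sorted r" and rne: "r \<noteq> []" using Cons.prems(1) rs by auto
    from col_strict_row_unins[OF sr rne ab _ u2] IH(3) rs
    have pu: "hd r < z" "col_strict r0 (first_row rs0)" by auto
    have ir: "row_ins x' r0 = (Some z, r)" using row_ins_row_unins[OF sr rne pu(1) u2] .
    have sr0: "sorted r0" using sorted_row_unins[OF sr rne pu(1) u2] .
    have lr0: "r0 \<noteq> []" using row_unins_eq[OF sr rne pu(1) u2] rne by auto
    have "tab_ins x' (r0 # rs0) = (r # rs, Suc k')" using ir IH(2) by simp
    moreover have "ssyt_rows (r0 # rs0)"
      using IH(1) sr0 lr0 pu(2) by (cases rs0) (auto simp: first_row_def)
    ultimately show ?thesis
      using e Suc ejects_row_unins[OF sr rne pu(1) u2] by (simp add: first_row_def)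
  qed
qed

lemma tab_unins_tab_ins: "ssyt_rows T \<Longrightarrow> tab_unins (fst (tab_ins x T)) (snd (tab_ins x T)) = (x, T)"
proof (induction T arbitrary: x)
  case Nil then show ?case by simp
next
  case (Cons r rs)
  show ?case
  proof (cases "row_ins x r")
    case (Pair ob r')
    show ?thesis
    proof (cases ob)
      case None
      with Pair have "r' = r @ [x]" using row_ins_None by auto
      with Pair None Cons.prems show ?thesis by auto
    next
      case (Some y)
      obtain rs' k where i: "tab_ins y rs = (rs', k)" by fastforce
      have IH: "tab_unins rs' k = (y, rs)" using Cons.IH[of y] Cons.prems i by simp
      have "row_unins y r' = (x, r)" using row_unins_row_ins[of r x y r'] Pair Some Cons.prems by simp
      with IH i Pair Some show ?thesis by simp
    qed
  qed
qed

definition addable :: "nat list \<Rightarrow> nat \<Rightarrow> bool" where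
  "addable sh k \<longleftrightarrow> k \<le> length sh \<and> (k = 0 \<or> (if k < length sh then sh ! k else 0) < sh ! (k - 1))"

(* A recording word lists, latest first, the rows in which the cells of a tableau were created. *)
fun rec_shape :: "nat list \<Rightarrow> nat list" where
  "rec_shape [] = []"
| "rec_shape (k # rho) = add_cell (rec_shape rho) k"

fun yamanouchi :: "nat list \<Rightarrow> bool" where
  "yamanouchi [] = True"
| "yamanouchi (k # rho) = (yamanouchi rho \<and> addable (rec_shape rho) k)"

lemma length_add_cell: "k \<le> length sh \<Longrightarrow> length (add_cell sh k) = (if k < length sh then length sh else Suc (length sh))"
  by (simp add: add_cell_def)

lemma nth_add_cell: "k \<le> length sh \<Longrightarrow> i < length (add_cell sh k) \<Longrightarrow>
   add_cell sh k ! i = (if i = k then (if k < length sh then Suc (sh ! k) else 1) else sh ! i)"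
  by (auto simp: add_cell_def nth_append)

lemma ssyt_rows_shape: "ssyt_rows T \<Longrightarrow> is_partition (map length T)"
  unfolding is_partition_def
proof (induction T)
  case Nil then show ?case by simp
next
  case (Cons r rs)
  then have IH: "sorted_wrt (\<ge>) (map length rs)" "0 \<notin> set (map length rs)" by auto
  have "\<forall>y\<in>set (map length rs). y \<le> length r"
  proof (cases rs)
    case Nil then show ?thesis by simp
  next
    case (Cons r2 rs2)
    with Cons.prems have "length r2 \<le> length r" by (simp add: col_strict_def)
    moreover have "\<forall>y\<in>set (map length rs2). y \<le> length r2" using IH(1) Cons by simp
    ultimately show ?thesis using Cons by auto
  qed
  with IH Cons.prems show ?case by auto
qed

lemma ssyt_rows_sorted: "ssyt_rows T \<Longrightarrow> \<forall>r\<in>set T. sorted r"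
  by (induction T) auto

lemma is_partition_add_cell:
  assumes "addable sh k" and "is_partition sh"
  shows "is_partition (add_cell sh k)"
proof -
  have s: "sorted_wrt (\<ge>) sh" and "0 \<notin> set sh" using assms(2) by (simp_all add: is_partition_def)
  then have "0 \<notin> set (add_cell sh k)"
    unfolding add_cell_def by (auto dest: set_update_subset_insert[THEN subsetD])
  moreover have le: "sh ! j \<le> sh ! i" if "i \<le> j" "j < length sh" for i j
    using s that by (cases "i = j") (auto simp: sorted_wrt_iff_nth_less)
  have "sorted_wrt (\<ge>) (add_cell sh k)"
    unfolding sorted_wrt_iff_nth_less
  proof (intro allI impI)
    fix i j assume ij: "i < j" "j < length (add_cell sh k)"
    have "sh ! (j - 1) \<le> sh ! i" if "j \<le> length sh" using le[of i "j - 1"] ij that by simp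
    then show "add_cell sh k ! j \<le> add_cell sh k ! i"
      using assms(1) le[of i j] le[of k j] ij
      by (auto simp: addable_def add_cell_def nth_list_update nth_append split: if_splits)
  qed
  ultimately show ?thesis by (simp add: is_partition_def)
qed

lemma sum_list_add_cell: "k \<le> length sh \<Longrightarrow> sum_list (add_cell sh k) = Suc (sum_list sh)"
  unfolding add_cell_def by (auto simp: sum_list_update)

lemma yamanouchi_rec_shape: "yamanouchi rho \<Longrightarrow> is_partition (rec_shape rho) \<and> sum_list (rec_shape rho) = length rho"
proof (induction rho)
  case Nil then show ?case by (simp add: is_partition_def)
next
  case (Cons k rho)
  then have IH: "is_partition (rec_shape rho)" "sum_list (rec_shape rho) = length rho"
    and ad: "addable (rec_shape rho) k" by auto
  have "k \<le> length (rec_shape rho)" using ad by (simp add: addable_def)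
  with IH ad show ?case by (simp add: is_partition_add_cell sum_list_add_cell)
qed

lemma addable_tab_ins: "ssyt_rows T \<Longrightarrow> addable (map length T) (snd (tab_ins x T))"
proof -
  assume s: "ssyt_rows T"
  let ?sh = "map length T" and ?k = "snd (tab_ins x T)"
  have sh: "map length (fst (tab_ins x T)) = add_cell ?sh ?k" and kl: "?k \<le> length T"
    using shape_tab_ins by auto
  have "sorted_wrt (\<ge>) (map length (fst (tab_ins x T)))"
    using ssyt_rows_shape[OF ssyt_rows_tab_ins[OF s]] by (simp add: is_partition_def)
  then have so: "sorted_wrt (\<ge>) (add_cell ?sh ?k)" using sh by simp
  show ?thesis
    unfolding addable_def
  proof (intro conjI)
    show "?k \<le> length ?sh" using kl by simp
    show "?k = 0 \<or> (if ?k < length ?sh then ?sh ! ?k else 0) < ?sh ! (?k - 1)"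
    proof (cases "?k = 0")
      case False
      have kl': "?k \<le> length ?sh" using kl by simp
      have l: "?k < length (add_cell ?sh ?k)" using kl' by (simp add: length_add_cell)
      have "add_cell ?sh ?k ! ?k \<le> add_cell ?sh ?k ! (?k - 1)"
        using so l False by (simp add: sorted_wrt_iff_nth_less)
      with False kl' l show ?thesis by (auto simp: nth_add_cell split: if_splits)
    qed simp
  qed
qed

lemma add_cell_inj: "add_cell a k = add_cell b k \<Longrightarrow> k \<le> length a \<Longrightarrow> k \<le> length b \<Longrightarrow>
  0 \<notin> set a \<Longrightarrow> 0 \<notin> set b \<Longrightarrow> a = b"
  unfolding add_cell_def
  apply (auto split: if_splits)
  subgoal by (metis Suc_inject list_update_id list_update_overwrite nth_list_update_eq)
  subgoal by (metis Suc_inject nth_append_length nth_list_update_eq nth_mem)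
  subgoal by (metis Suc_inject nth_append_length nth_list_update_eq nth_mem)
  done
lemma add_cell_is_corner:
  assumes "addable sh k" "sorted_wrt (\<ge>) sh" and P: "map length P = add_cell sh k"
  shows "is_corner P k"
proof -
  have k: "k \<le> length sh" using assms(1) by (simp add: addable_def)
  have len: "length P = length (add_cell sh k)" using P by (metis length_map)
  have nth: "length (P ! i) = add_cell sh k ! i" if "i < length P" for i
    using that P by (metis nth_map)
  show ?thesis
  proof (cases "Suc k < length sh")
    case True
    then have "sh ! Suc k \<le> sh ! k" using assms(2) by (simp add: sorted_wrt_iff_nth_less)
    then show ?thesis using True k len nth by (simp add: is_corner_def nth_add_cell length_add_cell)
  next
    case False
    then show ?thesis using k len by (auto simp: is_corner_def length_add_cell)
  qed
qed

section \<open>RSK\<close>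

(* The letters are inserted from the last one to the first, so the insertion sequence is rev v. *)
fun rsk :: "nat list \<Rightarrow> nat list list \<times> nat list" where
  "rsk [] = ([], [])"
| "rsk (x # v) = (case rsk v of (P, rho) \<Rightarrow> (case tab_ins x P of (P', k) \<Rightarrow> (P', k # rho)))"

lemma rsk_invariants: "rsk v = (P, rho) \<Longrightarrow> ssyt_rows P \<and> yamanouchi rho \<and> rec_shape rho = map length P \<and>
   mset (concat P) = mset v \<and> length rho = length v"
proof (induction v arbitrary: P rho)
  case Nil then show ?case by simp
next
  case (Cons x v)
  obtain P0 rho0 where r0: "rsk v = (P0, rho0)" by fastforce
  obtain P1 k where i: "tab_ins x P0 = (P1, k)" by fastforce
  have e: "P = P1" "rho = k # rho0" using Cons.prems r0 i by auto
  from Cons.IH[OF r0] have IH: "ssyt_rows P0" "yamanouchi rho0" "rec_shape rho0 = map length P0"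
    "mset (concat P0) = mset v" "length rho0 = length v" by auto
  have "ssyt_rows P1" using ssyt_rows_tab_ins[OF IH(1), of x] i by simp
  moreover have "addable (rec_shape rho0) k" using addable_tab_ins[OF IH(1), of x] i IH(3) by simp
  moreover have "map length P1 = add_cell (map length P0) k" using shape_tab_ins[of x P0] i by simp
  moreover have "mset (concat P1) = add_mset x (mset (concat P0))" using mset_tab_ins[of x P0] i by simp
  ultimately show ?case using e IH by simp
qed

lemma length_snd_rsk: "length (snd (rsk v)) = length v"
  by (induction v) (auto split: prod.splits)

lemma rsk_inj: "rsk v = rsk u \<Longrightarrow> v = u"
proof (induction v arbitrary: u)
  case Nil
  then have "snd (rsk u) = []" by (metis rsk.simps(1) snd_conv)
  then have "length (snd (rsk u)) = 0" by simp
  then show ?case using length_snd_rsk[of u] by simp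
next
  case (Cons x v)
  obtain P0 rho0 where r0: "rsk v = (P0, rho0)" by fastforce
  obtain P1 k where i: "tab_ins x P0 = (P1, k)" by fastforce
  have lu: "length u = Suc (length v)"
    using length_snd_rsk[of u] length_snd_rsk[of "x # v"] Cons.prems by simp
  then obtain y u' where u: "u = y # u'" by (cases u) auto
  obtain Q0 sig0 where s0: "rsk u' = (Q0, sig0)" by fastforce
  obtain Q1 k' where j: "tab_ins y Q0 = (Q1, k')" by fastforce
  from Cons.prems r0 i s0 j u have e: "P1 = Q1" "k = k'" "rho0 = sig0" by auto
  have "tab_unins P1 k = (x, P0)" using tab_unins_tab_ins[of P0 x] i rsk_invariants[OF r0] by simp
  moreover have "tab_unins Q1 k' = (y, Q0)" using tab_unins_tab_ins[of Q0 y] j rsk_invariants[OF s0] by simp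
  ultimately have "x = y" "P0 = Q0" using e by auto
  then have "rsk v = rsk u'" using r0 s0 e by simp
  with Cons.IH \<open>x = y\<close> u show ?case by simp
qed

lemma rsk_surj: "ssyt_rows P \<Longrightarrow> yamanouchi rho \<Longrightarrow> rec_shape rho = map length P \<Longrightarrow> \<exists>v. rsk v = (P, rho)"
proof (induction rho arbitrary: P)
  case Nil
  then have "P = []" by simp
  then show ?case by (intro exI[of _ "[]"]) simp
next
  case (Cons k rho)
  have ad: "addable (rec_shape rho) k" and vr: "yamanouchi rho" using Cons.prems by auto
  from yamanouchi_rec_shape[OF vr] have so: "sorted_wrt (\<ge>) (rec_shape rho)" and nz: "0 \<notin> set (rec_shape rho)"
    by (auto simp: is_partition_def)
  have e: "map length P = add_cell (rec_shape rho) k" using Cons.prems by simp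
  have co: "is_corner P k" using add_cell_is_corner[OF ad so e] .
  obtain x P0 where u: "tab_unins P k = (x, P0)" by fastforce
  from tab_ins_tab_unins[OF Cons.prems(1) co u] have s0: "ssyt_rows P0" and i: "tab_ins x P0 = (P, k)" by auto
  have "map length P = add_cell (map length P0) k" and kl: "k \<le> length P0"
    using shape_tab_ins[of x P0] i by auto
  then have "rec_shape rho = map length P0"
    using add_cell_inj[of "rec_shape rho" k "map length P0"] e ad nz ssyt_rows_shape[OF s0]
    by (auto simp: addable_def is_partition_def)
  from Cons.IH[OF s0 vr this] obtain v where "rsk v = (P0, rho)" by blast
  then have "rsk (x # v) = (P, k # rho)" using i by simp
  then show ?case by blast
qed

lemma row_ins_twice_less: "sorted r \<Longrightarrow> row_ins y r = (Some y1, r1) \<Longrightarrow> x < y \<Longrightarrow>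
  \<exists>x1 r2. row_ins x r1 = (Some x1, r2) \<and> x1 < y1"
proof (induction r arbitrary: r1)
  case (Cons c r)
  then show ?case using row_ins_Some[of y r y1] by (auto split: if_splits prod.splits)
qed simp

lemma row_ins_twice_ge: "sorted r \<Longrightarrow> row_ins y r = (Some y1, r1) \<Longrightarrow> y \<le> x \<Longrightarrow>
  row_ins x r1 = (Some x1, r2) \<Longrightarrow> y1 \<le> x1"
proof (induction r arbitrary: r1 r2)
  case (Cons c r)
  then show ?case using row_ins_Some[of x r x1] by (auto split: if_splits prod.splits)
qed simp
lemma row_ins_bumps: "a \<in> set r \<Longrightarrow> x < a \<Longrightarrow> \<exists>y r'. row_ins x r = (Some y, r')"
  by (induction r) (auto split: prod.splits)

lemma row_bumping_less: "\<forall>r\<in>set T. sorted r \<Longrightarrow> tab_ins y T = (T1, a) \<Longrightarrow> tab_ins x T1 = (T2, b) \<Longrightarrow>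
  x < y \<Longrightarrow> a < b"
proof (induction T arbitrary: x y T1 T2 a b)
  case (Cons r rs)
  obtain ob r1 where iy: "row_ins y r = (ob, r1)" by fastforce
  show ?case
  proof (cases ob)
    case None
    then have "r1 = r @ [y]" using iy row_ins_None by blast
    then obtain z r2 where "row_ins x r1 = (Some z, r2)"
      using row_ins_bumps[of y r1 x] Cons.prems by auto
    then show ?thesis using Cons.prems iy None by (auto split: prod.splits)
  next
    case (Some y1)
    moreover have "sorted r" using Cons.prems(1) by simp
    ultimately obtain x1 r2 where "row_ins x r1 = (Some x1, r2)" "x1 < y1"
      using row_ins_twice_less[of r y y1 r1 x] Cons.prems(4) iy by auto
    then show ?thesis using Cons.IH[of y1 _ _ x1] Cons.prems iy Some by (auto split: prod.splits)
  qed
qed auto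

lemma row_bumping_ge: "\<forall>r\<in>set T. sorted r \<Longrightarrow> tab_ins y T = (T1, a) \<Longrightarrow> tab_ins x T1 = (T2, b) \<Longrightarrow>
  y \<le> x \<Longrightarrow> b \<le> a"
proof (induction T arbitrary: x y T1 T2 a b)
  case (Cons r rs)
  obtain ob r1 where iy: "row_ins y r = (ob, r1)" by fastforce
  obtain ob' r2 where ix: "row_ins x r1 = (ob', r2)" by fastforce
  show ?case
  proof (cases ob)
    case None
    then have "r1 = r @ [y]" "\<forall>c\<in>set r. c \<le> y" using iy row_ins_None by blast+
    then have "\<forall>c\<in>set r1. c \<le> x" using Cons.prems(4) by auto
    then have "row_ins x r1 = (None, r1 @ [x])" by (rule row_ins_append)
    then show ?thesis using Cons.prems iy None by auto
  next
    case (Some y1)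
    show ?thesis
    proof (cases ob')
      case (Some x1)
      have "sorted r" using Cons.prems(1) by simp
      then have "y1 \<le> x1"
        using row_ins_twice_ge[of r y y1 r1 x] Cons.prems(4) iy ix Some \<open>ob = Some y1\<close> by simp
      then show ?thesis
        using Cons.IH[of y1 _ _ x1] Cons.prems iy ix Some \<open>ob = Some y1\<close> by (auto split: prod.splits)
    qed (use Cons.prems iy ix Some in \<open>auto split: prod.splits\<close>)
  qed
qed (auto split: if_splits)

definition Des_wrt :: "('b \<Rightarrow> 'b \<Rightarrow> bool) \<Rightarrow> 'b list \<Rightarrow> nat set" where
  "Des_wrt R w = {i. 1 \<le> i \<and> i < length w \<and> R (w ! (i - 1)) (w ! i)}"

lemma Des_wrt_singleton: "Des_wrt R [x] = {}" by (auto simp: Des_wrt_def)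

lemma Des_wrt_snoc: "Des_wrt R (rev (x # y # v)) = Des_wrt R (rev (y # v)) \<union> (if R y x then {Suc (length v)} else {})"
proof -
  have e: "rev (x # y # v) = rev (y # v) @ [x]" by simp
  show ?thesis
  proof (rule set_eqI)
    fix i
    show "i \<in> Des_wrt R (rev (x # y # v)) \<longleftrightarrow> i \<in> Des_wrt R (rev (y # v)) \<union> (if R y x then {Suc (length v)} else {})"
    proof (cases "i = Suc (length v)")
      case True
      have "rev (y # v) ! length v = y" by (simp add: nth_append)
      then show ?thesis using True unfolding Des_wrt_def by (auto simp: nth_append)
    next
      case False
      show ?thesis
      proof (cases "i < Suc (length v)")
        case True
        then show ?thesis using False unfolding e Des_wrt_def by (auto simp: nth_append)
      next
        case False
        then show ?thesis using \<open>i \<noteq> Suc (length v)\<close> unfolding Des_wrt_def by auto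
      qed
    qed
  qed
qed

(* By the row bumping lemma, the new cell lies in a strictly higher row than the previous one
   exactly when the inserted letter is smaller than the previous one. *)
lemma Des_rsk: "rsk v = (P, rho) \<Longrightarrow> Des_wrt (>) (rev v) = Des_wrt (<) (rev rho)"
proof (induction v arbitrary: P rho)
  case Nil then show ?case by (simp add: Des_wrt_def)
next
  case (Cons x v)
  obtain P0 rho0 where r0: "rsk v = (P0, rho0)" by fastforce
  obtain P1 k where i: "tab_ins x P0 = (P1, k)" by fastforce
  have e: "P = P1" "rho = k # rho0" using Cons.prems r0 i by auto
  show ?case
  proof (cases v)
    case Nil
    then have "rho0 = []" using r0 by simp
    then show ?thesis using e Nil by (simp add: Des_wrt_singleton)
  next
    case (Cons y v')
    obtain P00 rho00 where r00: "rsk v' = (P00, rho00)" by fastforce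
    obtain k0 where i0: "tab_ins y P00 = (P0, k0)" and rr: "rho0 = k0 # rho00"
      using r0 r00 Cons by (auto split: prod.splits)
    have s00: "\<forall>r\<in>set P00. sorted r" using rsk_invariants[OF r00] ssyt_rows_sorted by blast
    have bp: "(x < y \<longrightarrow> k0 < k) \<and> (y \<le> x \<longrightarrow> k \<le> k0)"
      using row_bumping_less[OF s00 i0 i] row_bumping_ge[OF s00 i0 i] by simp
    have lv: "length rho00 = length v'" using rsk_invariants[OF r00] by simp
    have IH: "Des_wrt (>) (rev (y # v')) = Des_wrt (<) (rev (k0 # rho00))"
      using Cons.IH[OF r0] Cons rr by simp
    have xk: "(x < y) = (k0 < k)" using bp by auto
    have A: "Des_wrt (>) (rev (x # y # v')) = Des_wrt (>) (rev (y # v')) \<union>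
      (if x < y then {Suc (length v')} else {})"
      using Des_wrt_snoc[of "(>)" x y v'] by simp
    have B: "Des_wrt (<) (rev (k # k0 # rho00)) = Des_wrt (<) (rev (k0 # rho00)) \<union>
      (if k0 < k then {Suc (length rho00)} else {})"
      using Des_wrt_snoc[of "(<)" k k0 rho00] by simp
    have "Des_wrt (>) (rev (x # y # v')) = Des_wrt (<) (rev (k # k0 # rho00))"
      unfolding A B IH xk lv by simp
    then show ?thesis using e rr Cons by simp
  qed
qed

section \<open>Tableaux on arbitrary sets of cells\<close>

(* ssyt and qyt with the diagram replaced by an arbitrary set of cells, so that recording
   tableaux can be built and taken apart one cell at a time. *)
definition ssyt_on :: "(nat \<times> nat) set \<Rightarrow> (nat \<times> nat \<Rightarrow> nat) \<Rightarrow> bool" where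
  "ssyt_on C T \<longleftrightarrow>
     (\<forall>p. p \<notin> C \<longrightarrow> T p = 0) \<and>
     (\<forall>p\<in>C. 1 \<le> T p) \<and>
     (\<forall>r c. (r, c) \<in> C \<and> (r, Suc c) \<in> C \<longrightarrow> T (r, c) \<le> T (r, Suc c)) \<and>
     (\<forall>r c. (r, c) \<in> C \<and> (Suc r, c) \<in> C \<longrightarrow> T (r, c) < T (Suc r, c))"

lemma ssyt_iff_ssyt_on: "ssyt nu T = ssyt_on (cells nu) T"
  by (simp add: ssyt_def ssyt_on_def)

definition qy_on :: "(nat \<times> nat) set \<Rightarrow> (nat \<times> nat \<Rightarrow> nat) \<Rightarrow> bool" where
  "qy_on C T \<longleftrightarrow> (\<forall>p\<in>C. 2 \<le> T p \<longrightarrow>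
        (\<exists>p1\<in>C. \<exists>p2\<in>C. T p1 = T p \<and> T p2 = T p - 1 \<and> fst p1 > fst p2))"

lemma qyt_iff_qy_on: "qyt nu T = (ssyt_on (cells nu) T \<and> qy_on (cells nu) T)"
  by (simp add: qyt_def ssyt_iff_ssyt_on qy_on_def)

lemma ssyt_on_insert:
  assumes T: "ssyt_on C T" and new: "(r, c) \<notin> C" "(r, Suc c) \<notin> C" "(Suc r, c) \<notin> C"
    and "1 \<le> v" and le: "\<forall>p\<in>C. T p \<le> v \<and> (T p = v \<longrightarrow> snd p < c)"
  shows "ssyt_on (insert (r, c) C) (T((r, c) := v))"
  unfolding ssyt_on_def
proof (intro conjI allI impI ballI)
  fix p assume "p \<notin> insert (r, c) C"
  then show "(T((r, c) := v)) p = 0" using T by (cases p) (auto simp: ssyt_on_def)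
next
  fix p assume "p \<in> insert (r, c) C"
  then show "1 \<le> (T((r, c) := v)) p" using T \<open>1 \<le> v\<close> by (auto simp: ssyt_on_def)
next
  fix i j assume "(i, j) \<in> insert (r, c) C \<and> (i, Suc j) \<in> insert (r, c) C"
  then show "(T((r, c) := v)) (i, j) \<le> (T((r, c) := v)) (i, Suc j)"
    using T new le unfolding ssyt_on_def by (cases "(i, Suc j) = (r, c)") auto
next
  fix i j assume "(i, j) \<in> insert (r, c) C \<and> (Suc i, j) \<in> insert (r, c) C"
  then show "(T((r, c) := v)) (i, j) < (T((r, c) := v)) (Suc i, j)"
    using T new le unfolding ssyt_on_def by (cases "(Suc i, j) = (r, c)") (auto simp: le_less)
qed

lemma qy_on_insert:
  assumes T: "qy_on C T" and new: "(r, c) \<notin> C"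
    and v: "2 \<le> v \<Longrightarrow> (\<exists>p\<in>C. T p = v) \<or> (\<exists>p\<in>C. T p = v - 1 \<and> fst p < r)"
  shows "qy_on (insert (r, c) C) (T((r, c) := v))"
  unfolding qy_on_def
proof (intro ballI impI)
  let ?T = "T((r, c) := v)"
  have old: "\<exists>p1\<in>C. \<exists>p2\<in>C. T p1 = w \<and> T p2 = w - 1 \<and> fst p2 < fst p1"
    if "p \<in> C" "T p = w" "2 \<le> w" for p w
    using T that unfolding qy_on_def by blast
  fix p assume p: "p \<in> insert (r, c) C" and two: "2 \<le> ?T p"
  show "\<exists>p1\<in>insert (r, c) C. \<exists>p2\<in>insert (r, c) C. ?T p1 = ?T p \<and> ?T p2 = ?T p - 1 \<and> fst p2 < fst p1"
  proof (cases "p = (r, c)")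
    case True
    then have "2 \<le> v" using two by simp
    then consider p' where "p' \<in> C" "T p' = v" | p' where "p' \<in> C" "T p' = v - 1" "fst p' < r"
      using v by blast
    then show ?thesis
    proof cases
      case (1 p')
      then obtain p1 p2 where "p1 \<in> C" "p2 \<in> C" "T p1 = v" "T p2 = v - 1" "fst p2 < fst p1"
        using old \<open>2 \<le> v\<close> by blast
      then show ?thesis using True new by (intro bexI[of _ p1] bexI[of _ p2]) auto
    next
      case (2 p')
      then show ?thesis using True new by (intro bexI[of _ "(r, c)"] bexI[of _ p']) auto
    qed
  next
    case False
    then obtain p1 p2 where "p1 \<in> C" "p2 \<in> C" "T p1 = T p" "T p2 = T p - 1" "fst p2 < fst p1"
      using old[of p "T p"] p two by auto
    then show ?thesis using False new by (intro bexI[of _ p1] bexI[of _ p2]) auto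
  qed
qed

lemma ssyt_on_remove: "ssyt_on C T \<Longrightarrow> ssyt_on (C - {p}) (T(p := 0))"
  unfolding ssyt_on_def by auto

lemma cells_mem: "(r, c) \<in> cells nu \<longleftrightarrow> r < length nu \<and> c < nu ! r"
  by (simp add: cells_def)

lemma finite_cells: "finite (cells nu)"
proof -
  have "cells nu \<subseteq> {..<length nu} \<times> {..<Max (insert 0 (set nu))}"
  proof
    fix p assume "p \<in> cells nu"
    then obtain r c where p: "p = (r, c)" "r < length nu" "c < nu ! r" by (auto simp: cells_def)
    then have "nu ! r \<le> Max (insert 0 (set nu))" by (intro Max_ge) auto
    then have "c < Max (insert 0 (set nu))" using p(3) by (rule order.strict_trans2[rotated])
    with p show "p \<in> {..<length nu} \<times> {..<Max (insert 0 (set nu))}" by auto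
  qed
  then show ?thesis by (rule finite_subset) auto
qed

lemma cells_down: "is_partition nu \<Longrightarrow> (r2, c) \<in> cells nu \<Longrightarrow> r1 \<le> r2 \<Longrightarrow> (r1, c) \<in> cells nu"
  using partition_nth_antimono[of nu r1 r2] by (auto simp: cells_mem)

lemma cells_left: "(r, c2) \<in> cells nu \<Longrightarrow> c1 \<le> c2 \<Longrightarrow> (r, c1) \<in> cells nu"
  by (auto simp: cells_mem)

lemma ssyt_row_mono: "ssyt_on (cells nu) T \<Longrightarrow> (r, c2) \<in> cells nu \<Longrightarrow> c1 \<le> c2 \<Longrightarrow> T (r, c1) \<le> T (r, c2)"
proof (induction c2)
  case 0 then show ?case by simp
next
  case (Suc c2)
  show ?case
  proof (cases "c1 = Suc c2")
    case True then show ?thesis by simp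
  next
    case False
    then have c1: "c1 \<le> c2" using Suc.prems by simp
    have m: "(r, c2) \<in> cells nu" using cells_left[OF Suc.prems(2), of c2] by simp
    have "T (r, c1) \<le> T (r, c2)" using Suc.IH[OF Suc.prems(1) m c1] .
    also have "T (r, c2) \<le> T (r, Suc c2)" using Suc.prems(1) m Suc.prems(2) unfolding ssyt_on_def by blast
    finally show ?thesis .
  qed
qed

lemma ssyt_col_strict: "is_partition nu \<Longrightarrow> ssyt_on (cells nu) T \<Longrightarrow> (r2, c) \<in> cells nu \<Longrightarrow> r1 < r2 \<Longrightarrow> T (r1, c) < T (r2, c)"
proof (induction r2)
  case 0 then show ?case by simp
next
  case (Suc r2)
  have m: "(r2, c) \<in> cells nu" using cells_down[OF Suc.prems(1) Suc.prems(3), of r2] by simp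
  have st: "T (r2, c) < T (Suc r2, c)" using Suc.prems(2) m Suc.prems(3) unfolding ssyt_on_def by blast
  show ?case
  proof (cases "r1 = r2")
    case True then show ?thesis using st by simp
  next
    case False
    then have "r1 < r2" using Suc.prems by simp
    then have "T (r1, c) < T (r2, c)" using Suc.IH[OF Suc.prems(1,2) m] by simp
    with st show ?thesis by simp
  qed
qed

lemma ssyt_eq_entries_row_le: "is_partition nu \<Longrightarrow> ssyt_on (cells nu) T \<Longrightarrow> p \<in> cells nu \<Longrightarrow> q \<in> cells nu \<Longrightarrow>
  T p = T q \<Longrightarrow> snd p < snd q \<Longrightarrow> fst q \<le> fst p"
proof (rule ccontr)
  assume pa: "is_partition nu" and s: "ssyt_on (cells nu) T" and p: "p \<in> cells nu" and q: "q \<in> cells nu"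
    and e: "T p = T q" and l: "snd p < snd q" and n: "\<not> fst q \<le> fst p"
  obtain a b where pp: "p = (a, b)" by fastforce
  obtain c d where qq: "q = (c, d)" by fastforce
  have m: "(a, d) \<in> cells nu" using cells_down[OF pa, of c d a] q n pp qq by simp
  have "T (a, b) \<le> T (a, d)" using ssyt_row_mono[OF s m, of b] l pp qq by simp
  also have "T (a, d) < T (c, d)" using ssyt_col_strict[OF pa s, of c d a] q n pp qq by simp
  finally show False using e pp qq by simp
qed

lemma ssyt_eq_entries_same_col: "is_partition nu \<Longrightarrow> ssyt_on (cells nu) T \<Longrightarrow> p \<in> cells nu \<Longrightarrow> q \<in> cells nu \<Longrightarrow>
  T p = T q \<Longrightarrow> snd p = snd q \<Longrightarrow> p = q"
proof (rule ccontr)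
  assume pa: "is_partition nu" and s: "ssyt_on (cells nu) T" and p: "p \<in> cells nu" and q: "q \<in> cells nu"
    and e: "T p = T q" and l: "snd p = snd q" and n: "p \<noteq> q"
  obtain a b where pp: "p = (a, b)" by fastforce
  obtain c d where qq: "q = (c, d)" by fastforce
  have "a \<noteq> c" using n l pp qq by auto
  then consider "a < c" | "c < a" by linarith
  then show False
  proof cases
    case 1
    then have "T (a, d) < T (c, d)" using ssyt_col_strict[OF pa s, of c d a] q qq by simp
    then show False using e l pp qq by simp
  next
    case 2
    then have "T (c, b) < T (a, b)" using ssyt_col_strict[OF pa s, of a b c] p pp by simp
    then show False using e l pp qq by simp
  qed
qed

lemma cells_add_cell: "k \<le> length sh \<Longrightarrow>
  cells (add_cell sh k) = insert (k, if k < length sh then sh ! k else 0) (cells sh)"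
  by (auto simp: cells_def add_cell_def nth_list_update nth_append less_Suc_eq split: if_splits)

lemma new_cell_notin_cells: "(k, if k < length sh then sh ! k else 0) \<notin> cells sh"
  by (simp add: cells_def)

definition remove_cell :: "nat list \<Rightarrow> nat \<Rightarrow> nat list" where
  "remove_cell nu k = (if nu ! k = 1 then butlast nu else nu[k := nu ! k - 1])"

lemma remove_cell_last:
  assumes "is_partition nu" "k < length nu" "Suc k < length nu \<Longrightarrow> nu ! Suc k < nu ! k"
    and "nu ! k = 1"
  shows "Suc k = length nu"
  using assms partition_nth_pos[of nu "Suc k"] by (metis Suc_lessI less_one not_less0)

lemma add_cell_remove_cell:
  assumes "is_partition nu" "k < length nu" "Suc k < length nu \<Longrightarrow> nu ! Suc k < nu ! k"
  shows "add_cell (remove_cell nu k) k = nu"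
proof (cases "nu ! k = 1")
  case True
  then have "Suc k = length nu" using remove_cell_last assms by blast
  then have "nu = butlast nu @ [nu ! k]" "length (butlast nu) = k"
    by (metis append_butlast_last_id diff_Suc_1 last_conv_nth list.size(3) nat.distinct(1), simp)
  then show ?thesis using True by (simp add: remove_cell_def add_cell_def)
next
  case False
  then show ?thesis using assms partition_nth_pos[of nu k] by (simp add: remove_cell_def add_cell_def)
qed

lemma is_partition_remove_cell:
  assumes pa: "is_partition nu" and k: "k < length nu" and corner: "Suc k < length nu \<Longrightarrow> nu ! Suc k < nu ! k"
  shows "is_partition (remove_cell nu k)"
proof (cases "nu ! k = 1")
  case True
  have "sorted_wrt (\<ge>) (butlast nu)" using pa by (simp add: is_partition_def butlast_conv_take)
  moreover have "0 \<notin> set (butlast nu)" using pa by (auto simp: is_partition_def dest: in_set_butlastD)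
  ultimately show ?thesis using True by (simp add: remove_cell_def is_partition_def)
next
  case False
  have le: "nu ! j \<le> nu ! i" if "i \<le> j" "j < length nu" for i j
    using partition_nth_antimono[OF pa] that by blast
  have "sorted_wrt (\<ge>) (nu[k := nu ! k - 1])"
    unfolding sorted_wrt_iff_nth_less
  proof (intro allI impI)
    fix i j assume ij: "i < j" "j < length (nu[k := nu ! k - 1])"
    then show "nu[k := nu ! k - 1] ! j \<le> nu[k := nu ! k - 1] ! i"
      using le[of i j] le[of "Suc k" j] corner k by (auto simp: nth_list_update)
  qed
  moreover have "0 \<notin> set (nu[k := nu ! k - 1])"
    using False pa partition_nth_pos[OF pa k] by (auto simp: is_partition_def dest: set_update_subset_insert[THEN subsetD])
  ultimately show ?thesis using False by (simp add: remove_cell_def is_partition_def)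
qed

lemma addable_remove_cell:
  assumes pa: "is_partition nu" and k: "k < length nu" and corner: "Suc k < length nu \<Longrightarrow> nu ! Suc k < nu ! k"
  shows "addable (remove_cell nu k) k"
proof (cases "nu ! k = 1")
  case True
  then have "Suc k = length nu" using remove_cell_last assms by blast
  then have "length (butlast nu) = k" by simp
  then show ?thesis using True partition_nth_pos[OF pa, of "k - 1"] k
    by (cases k) (simp_all add: remove_cell_def addable_def nth_butlast)
next
  case False
  then show ?thesis using partition_nth_antimono[OF pa, of "k - 1" k] partition_nth_pos[OF pa k] k
    by (cases k) (auto simp: remove_cell_def addable_def nth_list_update)
qed

(* The rightmost occurrence of the largest entry: the cell created last in a recording tableau. *)
definition rightmost_max :: "(nat \<times> nat) set \<Rightarrow> (nat \<times> nat \<Rightarrow> nat) \<Rightarrow> nat \<times> nat \<Rightarrow> bool" where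
  "rightmost_max C T n \<longleftrightarrow> n \<in> C \<and> (\<forall>p\<in>C. T p \<le> T n \<and> (T p = T n \<longrightarrow> snd p \<le> snd n))"

lemma ex_rightmost_max:
  fixes T :: "nat \<times> nat \<Rightarrow> nat"
  assumes "finite C" "C \<noteq> {}"
  shows "\<exists>n. rightmost_max C T n"
proof -
  define S where "S = {p \<in> C. T p = Max (T ` C)}"
  have "Max (T ` C) \<in> T ` C" using assms by simp
  then have "finite S" "S \<noteq> {}" using assms(1) unfolding S_def by (force, force)
  then have "Max (snd ` S) \<in> snd ` S" by simp
  then obtain n where n: "n \<in> S" "snd n = Max (snd ` S)" by force
  have "T p \<le> T n \<and> (T p = T n \<longrightarrow> snd p \<le> snd n)" if "p \<in> C" for p
    using that n \<open>finite S\<close> assms(1) by (auto simp: S_def)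
  moreover have "n \<in> C" using n by (simp add: S_def)
  ultimately show ?thesis unfolding rightmost_max_def by blast
qed

lemma rightmost_max_corner:
  assumes T: "ssyt_on (cells nu) T" and max: "rightmost_max (cells nu) T (k, c)"
  shows "Suc c = nu ! k" "(Suc k, c) \<notin> cells nu"
proof -
  have n: "(k, c) \<in> cells nu" using max by (simp add: rightmost_max_def)
  show "(Suc k, c) \<notin> cells nu"
  proof
    assume "(Suc k, c) \<in> cells nu"
    then have "T (k, c) < T (Suc k, c)" using T n unfolding ssyt_on_def by blast
    with max \<open>(Suc k, c) \<in> cells nu\<close> show False unfolding rightmost_max_def by fastforce
  qed
  show "Suc c = nu ! k"
  proof (rule ccontr)
    assume "Suc c \<noteq> nu ! k"
    then have "(k, Suc c) \<in> cells nu" using n by (auto simp: cells_mem)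
    then have "T (k, c) \<le> T (k, Suc c)" using T n unfolding ssyt_on_def by blast
    with max \<open>(k, Suc c) \<in> cells nu\<close> show False unfolding rightmost_max_def by fastforce
  qed
qed

lemma qy_on_remove_rightmost_max:
  assumes pa: "is_partition nu" and T: "ssyt_on (cells nu) T" "qy_on (cells nu) T"
    and max: "rightmost_max (cells nu) T n"
  shows "qy_on (cells nu - {n}) (T(n := 0))"
  unfolding qy_on_def
proof (intro ballI impI)
  have n: "n \<in> cells nu" using max by (simp add: rightmost_max_def)
  fix p assume p: "p \<in> cells nu - {n}" and two: "2 \<le> (T(n := 0)) p"
  then obtain p1 p2 where w: "p1 \<in> cells nu" "p2 \<in> cells nu" "T p1 = T p" "T p2 = T p - 1"
    "fst p2 < fst p1"
    using T(2) unfolding qy_on_def by auto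
  have "p2 \<noteq> n" using w max p two unfolding rightmost_max_def by fastforce
  show "\<exists>p1\<in>cells nu - {n}. \<exists>p2\<in>cells nu - {n}. (T(n := 0)) p1 = (T(n := 0)) p \<and>
      (T(n := 0)) p2 = (T(n := 0)) p - 1 \<and> fst p2 < fst p1"
  proof (cases "p1 = n")
    case False
    then show ?thesis using w p \<open>p2 \<noteq> n\<close> by (intro bexI[of _ p1] bexI[of _ p2]) auto
  next
    case True
    then have "snd p \<noteq> snd n" using ssyt_eq_entries_same_col[OF pa T(1), of p n] p n w by auto
    then have "snd p < snd n" using max p w True unfolding rightmost_max_def by fastforce
    then have "fst n \<le> fst p" using ssyt_eq_entries_row_le[OF pa T(1)] p n w True by auto
    then show ?thesis using w p \<open>p2 \<noteq> n\<close> True by (intro bexI[of _ p] bexI[of _ p2]) auto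
  qed
qed

section \<open>Recording words and quasi-Yamanouchi tableaux\<close>

definition rec_cells :: "nat list \<Rightarrow> (nat \<times> nat) set" where
  "rec_cells rho = {(r, c). c < count_list rho r}"

lemma rec_cells_Nil[simp]: "rec_cells [] = {}" by (simp add: rec_cells_def)

lemma rec_cells_Cons: "rec_cells (k # rho) = insert (k, count_list rho k) (rec_cells rho)"
  unfolding rec_cells_def by (auto split: if_splits)

lemma new_cell_notin_rec_cells: "(k, count_list rho k) \<notin> rec_cells rho"
  by (simp add: rec_cells_def)

lemma finite_rec_cells: "finite (rec_cells rho)"
  by (induction rho) (auto simp: rec_cells_Cons)

lemma card_rec_cells: "card (rec_cells rho) = length rho"
  by (induction rho) (auto simp: rec_cells_Cons finite_rec_cells new_cell_notin_rec_cells)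

lemma count_list_rec_shape: "yamanouchi rho \<Longrightarrow> count_list rho k = (if k < length (rec_shape rho) then rec_shape rho ! k else 0)"
proof (induction rho arbitrary: k)
  case Nil then show ?case by simp
next
  case (Cons k' rho)
  then have IH: "\<And>k. count_list rho k = (if k < length (rec_shape rho) then rec_shape rho ! k else 0)"
    and kl: "k' \<le> length (rec_shape rho)" by (auto simp: addable_def)
  show ?case
    using IH[of k] kl by (auto simp: nth_add_cell length_add_cell)
qed

lemma cells_rec_shape: "yamanouchi rho \<Longrightarrow> cells (rec_shape rho) = rec_cells rho"
  unfolding cells_def rec_cells_def by (auto simp: count_list_rec_shape split: if_splits)

lemma count_list_antimono: "yamanouchi rho \<Longrightarrow> r1 \<le> r2 \<Longrightarrow> count_list rho r2 \<le> count_list rho r1"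
proof -
  assume v: "yamanouchi rho" and r: "r1 \<le> r2"
  have s: "sorted_wrt (\<ge>) (rec_shape rho)" using yamanouchi_rec_shape[OF v] by (simp add: is_partition_def)
  show ?thesis
  proof (cases "r2 < length (rec_shape rho)")
    case True
    then have "rec_shape rho ! r2 \<le> rec_shape rho ! r1"
      using s r by (cases "r1 = r2") (auto simp: sorted_wrt_iff_nth_less)
    then show ?thesis using count_list_rec_shape[OF v, of r1] count_list_rec_shape[OF v, of r2] True r by simp
  next
    case False
    then show ?thesis using count_list_rec_shape[OF v, of r2] by simp
  qed
qed

(* The quasi-Yamanouchi recording tableau: the cell created at each step gets the value of the
   previous cell, plus one if it lies in a strictly higher row. std_tab is the standard recording
   tableau, which numbers the cells in the order of creation. *)
fun qy_entry :: "nat list \<Rightarrow> nat" where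
  "qy_entry [] = 0"
| "qy_entry [k] = 1"
| "qy_entry (k # j # rho) = qy_entry (j # rho) + (if j < k then 1 else 0)"

fun qy_tab :: "nat list \<Rightarrow> nat \<times> nat \<Rightarrow> nat" where
  "qy_tab [] = (\<lambda>_. 0)"
| "qy_tab (k # rho) = (qy_tab rho)((k, count_list rho k) := qy_entry (k # rho))"

fun std_tab :: "nat list \<Rightarrow> nat \<times> nat \<Rightarrow> nat" where
  "std_tab [] = (\<lambda>_. 0)"
| "std_tab (k # rho) = (std_tab rho)((k, count_list rho k) := Suc (length rho))"

lemma qy_entry_pos: "rho \<noteq> [] \<Longrightarrow> 1 \<le> qy_entry rho"
  by (induction rho rule: qy_entry.induct) auto

lemma qy_entry_Cons_ge: "qy_entry rho \<le> qy_entry (k # rho)"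
  by (cases rho) auto

lemma std_tab_outside: "p \<notin> rec_cells rho \<Longrightarrow> std_tab rho p = 0"
  by (induction rho) (auto simp: rec_cells_Cons)

lemma qy_tab_bounds: "p \<in> rec_cells rho \<Longrightarrow> 1 \<le> qy_tab rho p \<and> qy_tab rho p \<le> qy_entry rho"
proof (induction rho)
  case Nil then show ?case by simp
next
  case (Cons k rho)
  show ?case
  proof (cases "p = (k, count_list rho k)")
    case True then show ?thesis using qy_entry_pos[of "k # rho"] by simp
  next
    case False
    then have "p \<in> rec_cells rho" using Cons.prems by (simp add: rec_cells_Cons)
    with Cons.IH have "1 \<le> qy_tab rho p \<and> qy_tab rho p \<le> qy_entry rho" by simp
    with False qy_entry_Cons_ge[of rho k] show ?thesis by simp
  qed
qed

lemma qy_tab_max_col_le: "yamanouchi rho \<Longrightarrow> rho \<noteq> [] \<Longrightarrow> p \<in> rec_cells rho \<Longrightarrow> qy_tab rho p = qy_entry rho \<Longrightarrow>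
  snd p \<le> count_list (tl rho) (hd rho)"
proof (induction rho arbitrary: p)
  case Nil then show ?case by simp
next
  case (Cons k rho)
  show ?case
  proof (cases "p = (k, count_list rho k)")
    case True then show ?thesis by simp
  next
    case False
    then have p: "p \<in> rec_cells rho" using Cons.prems by (simp add: rec_cells_Cons)
    then have rne: "rho \<noteq> []" by auto
    then obtain j rho0 where rj: "rho = j # rho0" by (cases rho) auto
    have qp: "qy_tab rho p = qy_entry (k # rho)" using Cons.prems(4) False by simp
    have b: "qy_tab rho p \<le> qy_entry rho" using qy_tab_bounds[OF p] by simp
    have kj: "\<not> j < k"
    proof
      assume "j < k"
      then have "qy_entry (k # rho) = qy_entry rho + 1" using rj by simp
      with qp b show False by simp
    qed
    then have "qy_entry (k # rho) = qy_entry rho" using rj by simp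
    then have "snd p \<le> count_list rho0 j" using Cons.IH[OF _ rne p] Cons.prems(1) qp rj by simp
    also have "\<dots> \<le> count_list rho j" using rj by simp
    also have "\<dots> \<le> count_list rho k" using count_list_antimono[of rho k j] Cons.prems(1) kj by simp
    finally show ?thesis by simp
  qed
qed

lemma qy_tab_le_qy_entry_Cons:
  assumes y: "yamanouchi (k # rho)" and q: "q \<in> rec_cells rho"
  shows "qy_tab rho q \<le> qy_entry (k # rho) \<and>
    (qy_tab rho q = qy_entry (k # rho) \<longrightarrow> snd q < count_list rho k)"
proof -
  obtain j rho0 where rho: "rho = j # rho0" using q by (cases rho) auto
  have le: "qy_tab rho q \<le> qy_entry rho" using qy_tab_bounds[OF q] by simp
  show ?thesis
  proof (cases "j < k")
    case True
    then show ?thesis using le rho by simp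
  next
    case False
    have "snd q < count_list rho k" if "qy_tab rho q = qy_entry rho"
    proof -
      have "snd q \<le> count_list rho0 j" using qy_tab_max_col_le[of rho q] y q that rho by simp
      also have "\<dots> < count_list rho j" using rho by simp
      also have "\<dots> \<le> count_list rho k" using count_list_antimono[of rho k j] y False by simp
      finally show ?thesis .
    qed
    then show ?thesis using le rho False by auto
  qed
qed

lemma ssyt_on_qy_tab: "yamanouchi rho \<Longrightarrow> ssyt_on (rec_cells rho) (qy_tab rho)"
proof (induction rho)
  case Nil
  then show ?case by (simp add: ssyt_on_def)
next
  case (Cons k rho)
  have "(k, Suc (count_list rho k)) \<notin> rec_cells rho" by (simp add: rec_cells_def)
  moreover have "(Suc k, count_list rho k) \<notin> rec_cells rho"
    using count_list_antimono[of rho k "Suc k"] Cons.prems by (simp add: rec_cells_def)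
  moreover have "ssyt_on (rec_cells rho) (qy_tab rho)" using Cons by simp
  ultimately have "ssyt_on (insert (k, count_list rho k) (rec_cells rho))
      ((qy_tab rho)((k, count_list rho k) := qy_entry (k # rho)))"
    using qy_tab_le_qy_entry_Cons[OF Cons.prems] qy_entry_pos[of "k # rho"]
    by (intro ssyt_on_insert) (simp_all add: new_cell_notin_rec_cells)
  then show ?case by (simp only: qy_tab.simps rec_cells_Cons)
qed

lemma qy_on_qy_tab: "yamanouchi rho \<Longrightarrow> qy_on (rec_cells rho) (qy_tab rho)"
proof (induction rho)
  case Nil
  then show ?case by (simp add: qy_on_def)
next
  case (Cons k rho)
  let ?v = "qy_entry (k # rho)"
  have "(\<exists>p\<in>rec_cells rho. qy_tab rho p = ?v) \<or> (\<exists>p\<in>rec_cells rho. qy_tab rho p = ?v - 1 \<and> fst p < k)"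
    if two: "2 \<le> ?v"
  proof -
    obtain j rho0 where rho: "rho = j # rho0" using two by (cases rho) auto
    let ?h = "(j, count_list rho0 j)"
    have "?h \<in> rec_cells rho" "qy_tab rho ?h = qy_entry rho" using rho by (simp_all add: rec_cells_Cons)
    then show ?thesis using rho by (cases "j < k") auto
  qed
  moreover have "qy_on (rec_cells rho) (qy_tab rho)" using Cons by simp
  ultimately have "qy_on (insert (k, count_list rho k) (rec_cells rho))
      ((qy_tab rho)((k, count_list rho k) := qy_entry (k # rho)))"
    by (intro qy_on_insert) (simp_all add: new_cell_notin_rec_cells)
  then show ?case by (simp only: qy_tab.simps rec_cells_Cons)
qed

lemma qyt_qy_tab: "yamanouchi rho \<Longrightarrow> qyt (rec_shape rho) (qy_tab rho)"
  using ssyt_on_qy_tab qy_on_qy_tab cells_rec_shape qyt_iff_qy_on by simp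

lemma card_less_add_card_eq:
  assumes "finite C" "\<forall>q\<in>C. f q \<le> (v::nat)"
  shows "card {q \<in> C. f q < v} + card {q \<in> C. f q = v} = card C"
proof -
  have "{q \<in> C. f q < v} \<union> {q \<in> C. f q = v} = C" using assms(2) by force
  moreover have "card ({q \<in> C. f q < v} \<union> {q \<in> C. f q = v}) = card {q \<in> C. f q < v} + card {q \<in> C. f q = v}"
    by (rule card_Un_disjoint) (use assms(1) in auto)
  ultimately show ?thesis by simp
qed

lemma standardize_qy_tab_entry: "yamanouchi rho \<Longrightarrow> p \<in> rec_cells rho \<Longrightarrow>
  card {q \<in> rec_cells rho. qy_tab rho q < qy_tab rho p} +
  card {q \<in> rec_cells rho. qy_tab rho q = qy_tab rho p \<and> snd q < snd p} + 1 = std_tab rho p"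
proof (induction rho arbitrary: p)
  case Nil then show ?case by simp
next
  case (Cons k rho)
  let ?n = "(k, count_list rho k)" and ?v = "qy_entry (k # rho)" and ?T = "qy_tab (k # rho)"
  have C: "rec_cells (k # rho) = insert ?n (rec_cells rho)" "?n \<notin> rec_cells rho"
    by (simp_all add: rec_cells_Cons new_cell_notin_rec_cells)
  have T: "?T q = qy_tab rho q" "qy_tab rho q \<le> ?v" "qy_tab rho q = ?v \<longrightarrow> snd q < count_list rho k"
    if "q \<in> rec_cells rho" for q
    using that C(2) qy_tab_le_qy_entry_Cons[OF Cons.prems(1) that] by auto
  show ?case
  proof (cases "p = ?n")
    case True
    have "{q \<in> rec_cells (k # rho). ?T q < ?T p} = {q \<in> rec_cells rho. qy_tab rho q < ?v}"
      "{q \<in> rec_cells (k # rho). ?T q = ?T p \<and> snd q < snd p} = {q \<in> rec_cells rho. qy_tab rho q = ?v}"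
      using True C T by auto
    then show ?thesis
      using True card_less_add_card_eq[OF finite_rec_cells, of rho "qy_tab rho" ?v] T card_rec_cells[of rho]
      by simp
  next
    case False
    then have p: "p \<in> rec_cells rho" using Cons.prems(2) C by simp
    have "{q \<in> rec_cells (k # rho). ?T q < ?T p} = {q \<in> rec_cells rho. qy_tab rho q < qy_tab rho p}"
      "{q \<in> rec_cells (k # rho). ?T q = ?T p \<and> snd q < snd p}
        = {q \<in> rec_cells rho. qy_tab rho q = qy_tab rho p \<and> snd q < snd p}"
      using C T[OF p] T by auto
    then show ?thesis using Cons.IH[OF _ p] Cons.prems(1) False by simp
  qed
qed

lemma standardize_qy_tab: "yamanouchi rho \<Longrightarrow> standardize (rec_shape rho) (qy_tab rho) = std_tab rho"
proof (rule ext)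
  fix p :: "nat \<times> nat"
  assume v: "yamanouchi rho"
  obtain r c where p: "p = (r, c)" by fastforce
  show "standardize (rec_shape rho) (qy_tab rho) p = std_tab rho p"
  proof (cases "p \<in> rec_cells rho")
    case True
    then show ?thesis using standardize_qy_tab_entry[OF v True] p
      unfolding standardize_def cells_rec_shape[OF v] by simp
  next
    case False
    then show ?thesis using std_tab_outside[OF False] p
      unfolding standardize_def cells_rec_shape[OF v] by simp
  qed
qed

lemma std_tab_props: "p \<in> rec_cells rho \<Longrightarrow> 1 \<le> std_tab rho p \<and> std_tab rho p \<le> length rho \<and> fst p = rev rho ! (std_tab rho p - 1)"
proof (induction rho)
  case Nil then show ?case by simp
next
  case (Cons k rho)
  show ?case
  proof (cases "p = (k, count_list rho k)")
    case True then show ?thesis by (simp add: nth_append)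
  next
    case False
    then have pC: "p \<in> rec_cells rho" using Cons.prems by (simp add: rec_cells_Cons)
    with Cons.IH have IH: "1 \<le> std_tab rho p" "std_tab rho p \<le> length rho" "fst p = rev rho ! (std_tab rho p - 1)"
      by auto
    have "std_tab rho p - 1 < length rho" using IH by simp
    then show ?thesis using False IH by (simp add: nth_append)
  qed
qed

lemma std_tab_onto: "1 \<le> i \<Longrightarrow> i \<le> length rho \<Longrightarrow> \<exists>p\<in>rec_cells rho. std_tab rho p = i"
proof (induction rho)
  case Nil then show ?case by simp
next
  case (Cons k rho)
  show ?case
  proof (cases "i = Suc (length rho)")
    case True
    then show ?thesis by (intro bexI[of _ "(k, count_list rho k)"]) (auto simp: rec_cells_Cons)
  next
    case False
    then have "i \<le> length rho" using Cons.prems by simp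
    with Cons.IH Cons.prems obtain p where p: "p \<in> rec_cells rho" "std_tab rho p = i" by auto
    have "p \<noteq> (k, count_list rho k)" using p new_cell_notin_rec_cells by blast
    then show ?thesis using p by (intro bexI[of _ p]) (auto simp: rec_cells_Cons)
  qed
qed

lemma syt_Des_std_tab: "yamanouchi rho \<Longrightarrow> syt_Des (rec_shape rho) (std_tab rho) = Des_wrt (<) (rev rho)"
proof (rule set_eqI)
  fix i assume v: "yamanouchi rho"
  have ch: "card (cells (rec_shape rho)) = length rho" using cells_rec_shape[OF v] card_rec_cells by simp
  show "i \<in> syt_Des (rec_shape rho) (std_tab rho) \<longleftrightarrow> i \<in> Des_wrt (<) (rev rho)"
  proof
    assume "i \<in> syt_Des (rec_shape rho) (std_tab rho)"
    then obtain p1 p2 where i: "1 \<le> i" "i < length rho" and p: "p1 \<in> rec_cells rho" "p2 \<in> rec_cells rho"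
      "std_tab rho p1 = i" "std_tab rho p2 = Suc i" "fst p1 < fst p2"
      unfolding syt_Des_def cells_rec_shape[OF v] card_rec_cells by blast
    have "fst p1 = rev rho ! (i - 1)" "fst p2 = rev rho ! i"
      using std_tab_props[OF p(1)] std_tab_props[OF p(2)] p by auto
    then show "i \<in> Des_wrt (<) (rev rho)" using i p unfolding Des_wrt_def by auto
  next
    assume "i \<in> Des_wrt (<) (rev rho)"
    then have i: "1 \<le> i" "i < length rho" "rev rho ! (i - 1) < rev rho ! i" unfolding Des_wrt_def by auto
    obtain p1 where p1: "p1 \<in> rec_cells rho" "std_tab rho p1 = i" using std_tab_onto[of i rho] i by auto
    obtain p2 where p2: "p2 \<in> rec_cells rho" "std_tab rho p2 = Suc i" using std_tab_onto[of "Suc i" rho] i by auto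
    have "fst p1 = rev rho ! (i - 1)" "fst p2 = rev rho ! i"
      using std_tab_props[OF p1(1)] std_tab_props[OF p2(1)] p1 p2 by auto
    then have lt: "fst p1 < fst p2" using i by simp
    show "i \<in> syt_Des (rec_shape rho) (std_tab rho)"
      unfolding syt_Des_def cells_rec_shape[OF v] card_rec_cells using i p1 p2 lt by blast
  qed
qed

lemma qy_tab_inj: "yamanouchi r1 \<Longrightarrow> yamanouchi r2 \<Longrightarrow> rec_shape r1 = rec_shape r2 \<Longrightarrow> qy_tab r1 = qy_tab r2 \<Longrightarrow> r1 = r2"
proof -
  assume v1: "yamanouchi r1" and v2: "yamanouchi r2" and s: "rec_shape r1 = rec_shape r2" and q: "qy_tab r1 = qy_tab r2"
  have sm: "std_tab r1 = std_tab r2" using standardize_qy_tab[OF v1] standardize_qy_tab[OF v2] s q by metis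
  have C: "rec_cells r1 = rec_cells r2" using cells_rec_shape[OF v1] cells_rec_shape[OF v2] s by simp
  have l: "length r1 = length r2" using yamanouchi_rec_shape[OF v1] yamanouchi_rec_shape[OF v2] s by metis
  have "rev r1 = rev r2"
  proof (rule nth_equalityI)
    show "length (rev r1) = length (rev r2)" using l by simp
    fix i assume i: "i < length (rev r1)"
    obtain p where p: "p \<in> rec_cells r1" "std_tab r1 p = Suc i" using std_tab_onto[of "Suc i" r1] i by auto
    have "fst p = rev r1 ! i" using std_tab_props[OF p(1)] p by simp
    moreover have "fst p = rev r2 ! i" using std_tab_props[of p r2] p C sm by simp
    ultimately show "rev r1 ! i = rev r2 ! i" by simp
  qed
  then show "r1 = r2" by simp
qed

section \<open>Every quasi-Yamanouchi tableau is a recording tableau\<close>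

lemma partition_sum_0: "is_partition nu \<Longrightarrow> sum_list nu = 0 \<Longrightarrow> nu = []"
  by (cases nu) (auto simp: is_partition_def)

(* rho records the tableau T with its rightmost largest cell (k, c), holding m, removed. *)
context
  fixes nu :: "nat list" and T :: "nat \<times> nat \<Rightarrow> nat" and rho :: "nat list" and k c m :: nat
  assumes pa: "is_partition nu" and T: "ssyt_on (cells nu) T" "qy_on (cells nu) T"
    and y: "yamanouchi rho" and C: "cells nu = insert (k, c) (rec_cells rho)" "(k, c) \<notin> rec_cells rho"
    and Tm: "T = (qy_tab rho)((k, c) := m)"
    and max: "rightmost_max (cells nu) T (k, c)"
begin

private lemma T_rec_cells: "p \<in> rec_cells rho \<Longrightarrow> T p = qy_tab rho p \<and> p \<in> cells nu \<and> p \<noteq> (k, c)"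
  using C Tm by auto

private lemma T_new_cell: "(k, c) \<in> cells nu" "T (k, c) = m"
  using C Tm by simp_all

private lemma T_le_max: "p \<in> cells nu \<Longrightarrow> T p \<le> m \<and> (T p = m \<longrightarrow> snd p \<le> c)"
  using max T_new_cell(2) by (auto simp: rightmost_max_def)

lemma qy_entry_singleton_rightmost_max: "rho = [] \<Longrightarrow> qy_entry (k # rho) = m"
proof -
  assume "rho = []"
  then have cells: "cells nu = {(k, c)}" using C by simp
  then have "1 \<le> m" using T(1) Tm unfolding ssyt_on_def by auto
  moreover have "\<not> 2 \<le> m"
  proof
    assume "2 \<le> m"
    then obtain p2 where "p2 \<in> cells nu" "T p2 = m - 1"
      using T(2) T_new_cell unfolding qy_on_def by fastforce
    then show False using cells T_new_cell(2) \<open>2 \<le> m\<close> by auto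
  qed
  ultimately show ?thesis using \<open>rho = []\<close> by simp
qed

lemma qy_entry_tied_rightmost_max:
  assumes rho: "rho = j # rho0" and p: "p \<in> rec_cells rho" "T p = m"
  shows "qy_entry (k # rho) = m"
proof -
  let ?h = "(j, count_list rho0 j)"
  have h: "T ?h = qy_entry rho" "?h \<in> cells nu" "?h \<noteq> (k, c)"
    using T_rec_cells[of ?h] rho by (simp_all add: rec_cells_Cons)
  have "m \<le> qy_entry rho" using qy_tab_bounds[OF p(1)] T_rec_cells[OF p(1)] p(2) by simp
  moreover have "qy_entry rho \<le> m" using T_le_max[OF h(2)] h(1) by simp
  ultimately have "qy_entry rho = m" by simp
  have "T ?h = T (k, c)" using h(1) T_new_cell(2) \<open>qy_entry rho = m\<close> by simp
  have "snd ?h \<noteq> c"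
  proof
    assume "snd ?h = c"
    then have "?h = (k, c)"
      using ssyt_eq_entries_same_col[OF pa T(1) h(2) T_new_cell(1) \<open>T ?h = T (k, c)\<close>] by simp
    with h(3) show False ..
  qed
  then have "snd ?h < c" using T_le_max[OF h(2)] h \<open>qy_entry rho = m\<close> by simp
  then have "k \<le> j"
    using ssyt_eq_entries_row_le[OF pa T(1) h(2) T_new_cell(1) \<open>T ?h = T (k, c)\<close>] by simp
  then show ?thesis using rho \<open>qy_entry rho = m\<close> by simp
qed

lemma qy_entry_unique_rightmost_max:
  assumes rho: "rho = j # rho0" and unique: "\<forall>p\<in>rec_cells rho. T p \<noteq> m"
  shows "qy_entry (k # rho) = m"
proof -
  let ?h = "(j, count_list rho0 j)"
  have h: "T ?h = qy_entry rho" "?h \<in> cells nu" "?h \<in> rec_cells rho"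
    using T_rec_cells[of ?h] rho by (simp_all add: rec_cells_Cons)
  have "1 \<le> T ?h" "T ?h < m" using T(1) h T_le_max[OF h(2)] unique unfolding ssyt_on_def by (auto simp: le_less)
  then obtain p1 p2 where w: "p1 \<in> cells nu" "p2 \<in> cells nu" "T p1 = m" "T p2 = m - 1" "fst p2 < fst p1"
    using T(2) T_new_cell unfolding qy_on_def by fastforce
  have "p1 = (k, c)" "p2 \<in> rec_cells rho" using w unique C \<open>T ?h < m\<close> T_new_cell(2) by auto
  have "m - 1 \<le> qy_entry rho"
    using qy_tab_bounds[OF \<open>p2 \<in> rec_cells rho\<close>] T_rec_cells[OF \<open>p2 \<in> rec_cells rho\<close>] w by simp
  then have e: "qy_entry rho = m - 1" using h \<open>T ?h < m\<close> by simp
  have "snd p2 \<le> snd ?h"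
    using qy_tab_max_col_le[of rho p2] \<open>p2 \<in> rec_cells rho\<close> T_rec_cells[OF \<open>p2 \<in> rec_cells rho\<close>]
      w e rho y by simp
  then have "fst ?h \<le> fst p2"
    using ssyt_eq_entries_row_le[OF pa T(1) w(2) h(2)] ssyt_eq_entries_same_col[OF pa T(1) w(2) h(2)]
      w e h by (cases "snd p2 = snd ?h") auto
  then have "j < k" using w \<open>p1 = (k, c)\<close> by simp
  then show ?thesis using rho e \<open>1 \<le> T ?h\<close> h by simp
qed

lemma qy_entry_Cons_rightmost_max: "qy_entry (k # rho) = m"
proof (cases rho)
  case Nil
  then show ?thesis by (rule qy_entry_singleton_rightmost_max)
next
  case (Cons j rho0)
  then show ?thesis
    using qy_entry_tied_rightmost_max qy_entry_unique_rightmost_max by blast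
qed

end

lemma remove_rightmost_max:
  assumes pa: "is_partition nu" and T: "ssyt_on (cells nu) T" "qy_on (cells nu) T"
    and max: "rightmost_max (cells nu) T (k, c)"
  defines "nu' \<equiv> remove_cell nu k"
  shows "is_partition nu'" "addable nu' k" "add_cell nu' k = nu"
    and "cells nu = insert (k, c) (cells nu')" "(k, c) \<notin> cells nu'"
    and "c = (if k < length nu' then nu' ! k else 0)" "qyt nu' (T((k, c) := 0))"
proof -
  note corner = rightmost_max_corner[OF T(1) max]
  have k: "k < length nu" using max by (simp add: rightmost_max_def cells_mem)
  have "Suc k < length nu \<Longrightarrow> nu ! Suc k < nu ! k" using corner by (auto simp: cells_mem)
  then show nu': "is_partition nu'" "addable nu' k" "add_cell nu' k = nu"
    using is_partition_remove_cell[OF pa k] addable_remove_cell[OF pa k] add_cell_remove_cell[OF pa k]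
    by (simp_all add: nu'_def)
  have kl: "k \<le> length nu'" using nu'(2) by (simp add: addable_def)
  show c: "c = (if k < length nu' then nu' ! k else 0)"
    using nth_add_cell[OF kl, of k] corner(1) nu'(3) length_add_cell[OF kl] k by (auto split: if_splits)
  show cells: "cells nu = insert (k, c) (cells nu')" "(k, c) \<notin> cells nu'"
    using cells_add_cell[OF kl] new_cell_notin_cells[of k nu'] nu'(3) c by simp_all
  show "qyt nu' (T((k, c) := 0))"
    using ssyt_on_remove[OF T(1), of "(k, c)"] qy_on_remove_rightmost_max[OF pa T max] cells
    by (simp add: qyt_iff_qy_on)
qed

lemma qy_tab_surj: "is_partition nu \<Longrightarrow> qyt nu T \<Longrightarrow> \<exists>rho. yamanouchi rho \<and> rec_shape rho = nu \<and> qy_tab rho = T"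
proof (induction "sum_list nu" arbitrary: nu T)
  case 0
  then have "nu = []" using partition_sum_0 by simp
  then have "T = (\<lambda>_. 0)" using 0 by (auto simp: qyt_iff_qy_on ssyt_on_def cells_def)
  then show ?case using \<open>nu = []\<close> by (intro exI[of _ "[]"]) simp
next
  case (Suc n)
  have pa: "is_partition nu" and T: "ssyt_on (cells nu) T" "qy_on (cells nu) T"
    using Suc.prems by (auto simp: qyt_iff_qy_on)
  have "nu \<noteq> []" using Suc.hyps(2) by auto
  then have "(0, 0) \<in> cells nu" using partition_nth_pos[OF pa, of 0] by (simp add: cells_mem)
  then obtain k c where max: "rightmost_max (cells nu) T (k, c)"
    using ex_rightmost_max[OF finite_cells, of nu T] by (metis empty_iff prod.collapse)
  define nu' where "nu' = remove_cell nu k"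
  note nu' = remove_rightmost_max[OF pa T max, folded nu'_def]
  have "sum_list nu' = n"
    using sum_list_add_cell[of k nu'] nu'(2,3) Suc.hyps(2) by (simp add: addable_def)
  then obtain rho' where rho': "yamanouchi rho'" "rec_shape rho' = nu'" "qy_tab rho' = T((k, c) := 0)"
    using Suc.hyps(1) nu'(1,7) by blast
  have "count_list rho' k = c" using count_list_rec_shape[OF rho'(1), of k] rho'(2) nu'(6) by simp
  moreover have "T = (qy_tab rho')((k, c) := T (k, c))" using rho'(3) by auto
  moreover have "cells nu = insert (k, c) (rec_cells rho')" "(k, c) \<notin> rec_cells rho'"
    using nu'(4,5) cells_rec_shape[OF rho'(1)] rho'(2) by simp_all
  ultimately have "qy_entry (k # rho') = T (k, c)" "qy_tab (k # rho') = T"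
    using qy_entry_Cons_rightmost_max[OF pa T rho'(1) _ _ _ max] by auto
  moreover have "yamanouchi (k # rho')" "rec_shape (k # rho') = nu" using rho' nu' by simp_all
  ultimately show ?case by blast
qed

section \<open>A descent-preserving involution exchanging two adjacent letters\<close>

(* flip a 0 0 w reads w from left to right, collecting the letters a and Suc a into a weakly
   increasing run a^k (Suc a)^m, and writes each run back as a^m (Suc a)^k. A run ends at any
   other letter, at the end of w, or at a descent Suc a, a, which stays in place. *)
primrec flip :: "nat \<Rightarrow> nat \<Rightarrow> nat \<Rightarrow> nat list \<Rightarrow> nat list" where
  "flip a k m [] = replicate m a @ replicate k (Suc a)"
| "flip a k m (x # w) = (if x = a then (if m = 0 then flip a (Suc k) 0 w
        else replicate (m - 1) a @ replicate k (Suc a) @ [Suc a, a] @ flip a 0 0 w)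
     else if x = Suc a then flip a k (Suc m) w
     else replicate m a @ replicate k (Suc a) @ x # flip a 0 0 w)"

definition swap_letter :: "nat \<Rightarrow> nat \<Rightarrow> nat" where
  "swap_letter a x = (if x = a then Suc a else if x = Suc a then a else x)"

lemma length_flip: "length (flip a k m w) = k + m + length w"
  by (induction w arbitrary: k m) auto

lemma add_mset_replicate_mset_pred: "0 < m \<Longrightarrow> add_mset a (replicate_mset (m - Suc 0) a) = replicate_mset m a"
  by (cases m) auto

lemma mset_flip: "mset (flip a k m w) = mset (map (swap_letter a) w) + replicate_mset m a + replicate_mset k (Suc a)"
  by (induction w arbitrary: k m) (auto simp: swap_letter_def add_mset_replicate_mset_pred)

lemma flip_replicate_lower: "flip a k 0 (replicate i a @ Z) = flip a (k + i) 0 Z"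
  by (induction i arbitrary: k) auto

lemma flip_replicate_upper: "flip a k m (replicate j (Suc a) @ Z) = flip a k (m + j) Z"
  by (induction j arbitrary: m) auto

lemma flip_flip: "flip a 0 0 (flip a k m w) = replicate k a @ replicate m (Suc a) @ w"
  by (induction w arbitrary: k m)
    (auto simp: flip_replicate_lower[where k = 0, simplified] flip_replicate_upper
      flip_replicate_upper[where Z = "[]", simplified] replicate_app_Cons_same simp flip: replicate_Suc)

definition same_Des :: "nat list \<Rightarrow> nat list \<Rightarrow> bool" where
  "same_Des u v \<longleftrightarrow> length u = length v \<and> (\<forall>i. Suc i < length u \<longrightarrow> (u ! Suc i < u ! i \<longleftrightarrow> v ! Suc i < v ! i))"

lemma same_Des_Des_wrt: "same_Des u v \<Longrightarrow> Des_wrt (>) u = Des_wrt (>) v"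
  unfolding same_Des_def Des_wrt_def
proof (intro set_eqI iffI; clarsimp)
  fix i assume a: "length u = length v" "\<forall>i. Suc i < length v \<longrightarrow> (u ! Suc i < u ! i) = (v ! Suc i < v ! i)"
    "Suc 0 \<le> i" "i < length v"
  then obtain j where j: "i = Suc j" by (cases i) auto
  then show "u ! i < u ! (i - Suc 0) \<Longrightarrow> v ! i < v ! (i - Suc 0)"
    and "v ! i < v ! (i - Suc 0) \<Longrightarrow> u ! i < u ! (i - Suc 0)" using a by auto
qed

lemma same_Des_refl: "same_Des u u" by (simp add: same_Des_def)

lemma same_Des_sorted: "sorted u \<Longrightarrow> sorted v \<Longrightarrow> length u = length v \<Longrightarrow> same_Des u v"
  unfolding same_Des_def by (auto simp: sorted_iff_nth_mono leD)

lemma same_Des_append: "same_Des X X' \<Longrightarrow> same_Des Y Y' \<Longrightarrow>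
  (X \<noteq> [] \<Longrightarrow> Y \<noteq> [] \<Longrightarrow> (hd Y < last X \<longleftrightarrow> hd Y' < last X')) \<Longrightarrow> same_Des (X @ Y) (X' @ Y')"
proof -
  assume x: "same_Des X X'" and y: "same_Des Y Y'" and b: "X \<noteq> [] \<Longrightarrow> Y \<noteq> [] \<Longrightarrow> (hd Y < last X \<longleftrightarrow> hd Y' < last X')"
  have lx: "length X = length X'" and ly: "length Y = length Y'" using x y by (auto simp: same_Des_def)
  show ?thesis
    unfolding same_Des_def
  proof (intro conjI allI impI)
    show "length (X @ Y) = length (X' @ Y')" using lx ly by simp
    fix i assume i: "Suc i < length (X @ Y)"
    show "(X @ Y) ! Suc i < (X @ Y) ! i \<longleftrightarrow> (X' @ Y') ! Suc i < (X' @ Y') ! i"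
    proof (cases "Suc i < length X")
      case True
      then show ?thesis using x lx by (simp add: nth_append same_Des_def)
    next
      case False
      show ?thesis
      proof (cases "Suc i = length X")
        case True
        then have ne: "X \<noteq> []" "Y \<noteq> []" using i by auto
        have ii: "i = length X - 1" "i = length X' - 1" using True lx by auto
        have ne': "X' \<noteq> []" "Y' \<noteq> []" using ne lx ly by auto
        have "X ! i = last X" "X' ! i = last X'" using ii ne ne' by (auto simp: last_conv_nth)
        moreover have "Y ! 0 = hd Y" "Y' ! 0 = hd Y'" using ne ne' by (auto simp: hd_conv_nth)
        ultimately show ?thesis using True lx b[OF ne] by (simp add: nth_append)
      next
        case False2: False
        then have "length X \<le> i" using False by simp
        moreover then have "Suc (i - length X) < length Y" using i by simp
        ultimately show ?thesis using y lx ly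
          by (simp add: nth_append same_Des_def Suc_diff_le)
      qed
    qed
  qed
qed

definition close_letters :: "nat \<Rightarrow> nat \<Rightarrow> nat \<Rightarrow> bool" where
  "close_letters a x y \<longleftrightarrow> (x \<in> {a, Suc a} \<and> y \<in> {a, Suc a}) \<or> x = y"

lemma set_blocks: "set (replicate i a @ replicate j (Suc a)) \<subseteq> {a, Suc a}"
  by auto

lemma same_Des_Cons:
  "same_Des Y Y' \<Longrightarrow> (Y \<noteq> [] \<Longrightarrow> (hd Y < y \<longleftrightarrow> hd Y' < y)) \<Longrightarrow> same_Des (y # Y) (y # Y')"
  using same_Des_append[of "[y]" "[y]" Y Y'] by (simp add: same_Des_refl)

lemma same_Des_block_append:
  assumes "sorted S" "sorted S'" "length S = length S'" "set S \<subseteq> {a, Suc a}" "set S' \<subseteq> {a, Suc a}"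
    and "same_Des Y Y'" "Y \<noteq> [] \<Longrightarrow> hd Y = hd Y' \<and> hd Y \<noteq> a"
  shows "same_Des (S @ Y) (S' @ Y')"
proof (rule same_Des_append[OF same_Des_sorted[OF assms(1-3)] assms(6)])
  assume "S \<noteq> []" "Y \<noteq> []"
  then have "last S \<in> {a, Suc a}" "last S' \<in> {a, Suc a}"
    using assms(3-5) by (metis last_in_set length_0_conv subsetD)+
  then show "hd Y < last S \<longleftrightarrow> hd Y' < last S'" using assms(7) \<open>Y \<noteq> []\<close> by auto
qed

lemma close_letters_hd_block_append:
  assumes "length S = length S'" "set S \<subseteq> {a, Suc a}" "set S' \<subseteq> {a, Suc a}"
    and "Y \<noteq> [] \<Longrightarrow> hd Y = hd Y'" "S @ Y \<noteq> []"
  shows "close_letters a (hd (S @ Y)) (hd (S' @ Y'))"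
proof (cases S)
  case Nil
  then show ?thesis using assms by (simp add: close_letters_def)
next
  case (Cons s S0)
  then obtain s' S0' where "S' = s' # S0'" using assms(1) by (cases S') auto
  then show ?thesis using Cons assms(2,3) by (simp add: close_letters_def)
qed

lemma same_Des_flip: "same_Des (flip a k m w) (replicate k a @ replicate m (Suc a) @ w) \<and>
  (0 < k + m + length w \<longrightarrow> close_letters a (hd (flip a k m w)) (hd (replicate k a @ replicate m (Suc a) @ w)))"
proof (induction w arbitrary: k m)
  case Nil
  have "same_Des (replicate m a @ replicate k (Suc a)) (replicate k a @ replicate m (Suc a))"
    by (rule same_Des_sorted) (simp_all add: sorted_append)
  then show ?case by (cases k; cases m) (simp_all add: close_letters_def)
next
  case (Cons x w)
  have IH: "same_Des (flip a 0 0 w) w" "w \<noteq> [] \<Longrightarrow> close_letters a (hd (flip a 0 0 w)) (hd w)"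
    using Cons.IH[of 0 0] by auto
  have "flip a 0 0 w \<noteq> [] \<longleftrightarrow> w \<noteq> []" using length_flip[of a 0 0 w] by auto
  then have IH_Cons: "same_Des (y # flip a 0 0 w) (y # w)" if "\<And>z z'. close_letters a z z' \<Longrightarrow> z < y \<longleftrightarrow> z' < y" for y
    using same_Des_Cons[OF IH(1)] IH(2) that by blast
  consider "x = a" "m = 0" | "x = a" "0 < m" | "x = Suc a" | "x \<notin> {a, Suc a}" by blast
  then show ?case
  proof cases
    case 1
    then show ?thesis using Cons.IH[of "Suc k" 0] by (simp add: replicate_app_Cons_same)
  next
    case 2
    let ?S = "replicate (m - 1) a @ replicate k (Suc a)" and ?S' = "replicate k a @ replicate (m - 1) (Suc a)"
    have "same_Des (Suc a # a # flip a 0 0 w) (Suc a # a # w)"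
      by (rule same_Des_Cons[OF IH_Cons]) (auto simp: close_letters_def)
    moreover have "replicate k a @ replicate m (Suc a) @ x # w = ?S' @ Suc a # a # w"
      using 2 by (cases m) (auto simp: replicate_app_Cons_same)
    ultimately show ?thesis
      using 2 same_Des_block_append[of ?S ?S' a] close_letters_hd_block_append[of ?S ?S' a]
        set_blocks[of "m - 1" a k] set_blocks[of k a "m - 1"]
      by (simp add: sorted_append)
  next
    case 3
    then show ?thesis using Cons.IH[of k "Suc m"] by (simp add: replicate_app_Cons_same)
  next
    case 4
    let ?S = "replicate m a @ replicate k (Suc a)" and ?S' = "replicate k a @ replicate m (Suc a)"
    have "same_Des (x # flip a 0 0 w) (x # w)"
      by (rule IH_Cons) (use 4 in \<open>auto simp: close_letters_def\<close>)
    then show ?thesis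
      using 4 same_Des_block_append[of ?S ?S' a] close_letters_hd_block_append[of ?S ?S' a]
        set_blocks[of m a k] set_blocks[of k a m]
      by (simp add: sorted_append)
  qed
qed

lemma Des_wrt_flip: "Des_wrt (>) (flip a 0 0 w) = Des_wrt (>) w"
  using same_Des_Des_wrt same_Des_flip[of a 0 0 w] by simp

definition swap_adj :: "nat \<Rightarrow> 'a list \<Rightarrow> 'a list" where
  "swap_adj j c = c[j := c ! Suc j, Suc j := c ! j]"

lemma count_list_map_swap_letter: "count_list (map (swap_letter a) w) y = count_list w (swap_letter a y)"
  by (induction w) (auto simp: swap_letter_def)

lemma word_Des_eq_Des_wrt: "word_Des w = Des_wrt (>) w"
  by (simp add: word_Des_def Des_wrt_def)

lemma flip_words: "Suc j < length c \<Longrightarrow> w \<in> words c \<Longrightarrow> flip (Suc j) 0 0 w \<in> words (swap_adj j c)"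
proof -
  assume j: "Suc j < length c" and w: "w \<in> words c"
  let ?a = "Suc j"
  have ms: "mset (flip ?a 0 0 w) = mset (map (swap_letter ?a) w)" using mset_flip[of ?a 0 0 w] by simp
  have lsw: "length (swap_adj j c) = length c" by (simp add: swap_adj_def)
  have msc: "mset (swap_adj j c) = mset c" unfolding swap_adj_def using j by (intro mset_swap) auto
  have "sum_list (swap_adj j c) = sum_list c"
    using msc by (metis sum_mset_sum_list)
  then have l: "length (flip ?a 0 0 w) = sum_list (swap_adj j c)" using w length_flip[of ?a 0 0 w] by (simp add: words_def)
  have "set (flip ?a 0 0 w) = swap_letter ?a ` set w" using ms by (metis list.set_map set_mset_mset)
  moreover have "swap_letter ?a ` set w \<subseteq> {1..length c}" using w j by (auto simp: words_def swap_letter_def)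
  ultimately have s: "set (flip ?a 0 0 w) \<subseteq> {1..length (swap_adj j c)}" using lsw by simp
  have cnt: "\<forall>i<length (swap_adj j c). count_list (flip ?a 0 0 w) (Suc i) = swap_adj j c ! i"
  proof (intro allI impI)
    fix i assume i: "i < length (swap_adj j c)"
    have "count_list (flip ?a 0 0 w) (Suc i) = count (mset (flip ?a 0 0 w)) (Suc i)" by (simp add: count_mset)
    also have "\<dots> = count_list (map (swap_letter ?a) w) (Suc i)" using ms by (metis count_mset)
    also have "\<dots> = count_list w (swap_letter ?a (Suc i))" by (rule count_list_map_swap_letter)
    also have "\<dots> = swap_adj j c ! i"
    proof -
      have cw: "\<And>i. i < length c \<Longrightarrow> count_list w (Suc i) = c ! i" using w by (simp add: words_def)
      consider "i = j" | "i = Suc j" | "i \<noteq> j \<and> i \<noteq> Suc j" by blast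
      then show ?thesis
      proof cases
        case 1 then show ?thesis using cw[of "Suc j"] j by (simp add: swap_letter_def swap_adj_def)
      next
        case 2 then show ?thesis using cw[of j] j by (simp add: swap_letter_def swap_adj_def)
      next
        case 3 then show ?thesis using cw[of i] i lsw by (simp add: swap_letter_def swap_adj_def)
      qed
    qed
    finally show "count_list (flip ?a 0 0 w) (Suc i) = swap_adj j c ! i" .
  qed
  show ?thesis using l s cnt lsw unfolding words_def by simp
qed

lemma swap_adj_swap_adj: "Suc j < length c \<Longrightarrow> swap_adj j (swap_adj j c) = c"
  unfolding swap_adj_def by (auto simp: list_update_swap nth_list_update)

lemma length_swap_adj: "length (swap_adj j c) = length c"
  by (simp add: swap_adj_def)

lemma sum_words_swap_adj: "Suc j < length c \<Longrightarrow>
  (\<Sum>w\<in>words (swap_adj j c). g (word_Des w)) = (\<Sum>w\<in>words c. g (word_Des w))"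
proof -
  assume j: "Suc j < length c"
  let ?f = "flip (Suc j) 0 0"
  have inv: "\<And>w. ?f (?f w) = w" using flip_flip[of "Suc j" 0 0] by simp
  have b: "bij_betw ?f (words c) (words (swap_adj j c))"
  proof (rule bij_betw_byWitness[where f' = ?f])
    show "\<forall>a\<in>words c. ?f (?f a) = a" using inv by simp
    show "\<forall>a\<in>words (swap_adj j c). ?f (?f a) = a" using inv by simp
    show "?f ` words c \<subseteq> words (swap_adj j c)" using flip_words[OF j] by blast
    have j': "Suc j < length (swap_adj j c)" using j by (simp add: length_swap_adj)
    show "?f ` words (swap_adj j c) \<subseteq> words c" using flip_words[OF j'] swap_adj_swap_adj[OF j] by fastforce
  qed
  have "(\<Sum>w\<in>words c. g (word_Des (?f w))) = (\<Sum>w\<in>words (swap_adj j c). g (word_Des w))"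
    by (rule sum.reindex_bij_betw[OF b])
  moreover have "\<And>w. word_Des (?f w) = word_Des w" by (simp add: word_Des_eq_Des_wrt Des_wrt_flip)
  ultimately show ?thesis by simp
qed

lemma swap_adj_middle: "swap_adj (length d1) (d1 @ x # y # d2) = d1 @ y # x # d2"
  by (simp add: swap_adj_def list_update_append nth_append)

lemma swap_adj_Cons: "swap_adj (Suc j) (x # l) = x # swap_adj j l"
  by (simp add: swap_adj_def)

lemma swap_adj_invariant_move_to_front: "(\<forall>c j. Suc j < length c \<longrightarrow> f (swap_adj j c) = f c) \<Longrightarrow> f (d1 @ x # d2) = f (x # d1 @ d2)"
proof (induction d1 arbitrary: d2 rule: rev_induct)
  case Nil then show ?case by simp
next
  case (snoc y d1)
  have "f ((d1 @ [y]) @ x # d2) = f (swap_adj (length d1) (d1 @ x # y # d2))"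
    by (simp add: swap_adj_middle)
  also have "\<dots> = f (d1 @ x # y # d2)" using snoc.prems by simp
  also have "\<dots> = f (x # d1 @ y # d2)" using snoc.IH[OF snoc.prems] .
  finally show ?case by simp
qed

lemma swap_adj_invariant_mset:
  fixes f :: "'a list \<Rightarrow> 'b" and c d :: "'a list"
  shows "(\<forall>c j. Suc j < length c \<longrightarrow> f (swap_adj j c) = f c) \<Longrightarrow> mset c = mset d \<Longrightarrow> f c = f d"
proof (induction c arbitrary: d f)
  case Nil then show ?case by simp
next
  case (Cons x c)
  have "x \<in> set d" using Cons.prems(2) by (metis list.set_intros(1) set_mset_mset)
  then obtain d1 d2 where d: "d = d1 @ x # d2" by (meson split_list)
  have "f d = f (x # d1 @ d2)" using swap_adj_invariant_move_to_front[OF Cons.prems(1)] d by simp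
  moreover have "mset c = mset (d1 @ d2)" using Cons.prems(2) d by simp
  moreover have "\<forall>c j. Suc j < length c \<longrightarrow> (\<lambda>l. f (x # l)) (swap_adj j c) = (\<lambda>l. f (x # l)) c"
  proof (intro allI impI)
    fix c' :: "'a list" and j :: nat assume "Suc j < length c'"
    then have "Suc (Suc j) < length (x # c')" by simp
    then have "f (swap_adj (Suc j) (x # c')) = f (x # c')" using Cons.prems(1) by blast
    then show "(\<lambda>l. f (x # l)) (swap_adj j c') = (\<lambda>l. f (x # l)) c'" by (simp add: swap_adj_Cons)
  qed
  ultimately show ?case using Cons.IH[of "\<lambda>l. f (x # l)" "d1 @ d2"] by simp
qed

lemma sum_words_perm: "mset c = mset d \<Longrightarrow> (\<Sum>w\<in>words c. g (word_Des w)) = (\<Sum>w\<in>words d. g (word_Des w))"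
  using swap_adj_invariant_mset[where f = "\<lambda>c. \<Sum>w\<in>words c. g (word_Des w)"] sum_words_swap_adj by metis

section \<open>Tableaux as lists of rows\<close>

lemma ssyt_rows_iff: "ssyt_rows P \<longleftrightarrow> (\<forall>r<length P. P ! r \<noteq> [] \<and> sorted (P ! r)) \<and>
   (\<forall>r. Suc r < length P \<longrightarrow> col_strict (P ! r) (P ! Suc r))"
proof (induction P)
  case Nil then show ?case by simp
next
  case (Cons r rs)
  have A: "(\<forall>i<length (r # rs). (r # rs) ! i \<noteq> [] \<and> sorted ((r # rs) ! i)) \<longleftrightarrow>
      (r \<noteq> [] \<and> sorted r) \<and> (\<forall>i<length rs. rs ! i \<noteq> [] \<and> sorted (rs ! i))"
    by (simp add: All_less_Suc2)
  have B: "(\<forall>i. Suc i < length (r # rs) \<longrightarrow> col_strict ((r # rs) ! i) ((r # rs) ! Suc i)) \<longleftrightarrow>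
      (case rs of [] \<Rightarrow> True | r2 # _ \<Rightarrow> col_strict r r2) \<and> (\<forall>i. Suc i < length rs \<longrightarrow> col_strict (rs ! i) (rs ! Suc i))"
  proof (cases rs)
    case Nil then show ?thesis by simp
  next
    case (Cons r2 rs2)
    have "(\<forall>i. Suc i < length (r # rs) \<longrightarrow> col_strict ((r # rs) ! i) ((r # rs) ! Suc i)) \<longleftrightarrow>
       (\<forall>i<length rs. col_strict ((r # rs) ! i) (rs ! i))" by auto
    also have "\<dots> \<longleftrightarrow> col_strict r r2 \<and> (\<forall>i. Suc i < length rs \<longrightarrow> col_strict (rs ! i) (rs ! Suc i))"
      using Cons by (auto simp: All_less_Suc2)
    finally show ?thesis using Cons by simp
  qed
  show ?case unfolding A B ssyt_rows.simps Cons.IH by blast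
qed

definition tab_of_rows :: "nat list list \<Rightarrow> nat \<times> nat \<Rightarrow> nat" where
  "tab_of_rows P = (\<lambda>(r, c). if r < length P \<and> c < length (P ! r) then P ! r ! c else 0)"

definition rows_of_tab :: "nat list \<Rightarrow> (nat \<times> nat \<Rightarrow> nat) \<Rightarrow> nat list list" where
  "rows_of_tab nu T = map (\<lambda>r. map (\<lambda>c. T (r, c)) [0..<nu ! r]) [0..<length nu]"

definition row_tabs :: "nat \<Rightarrow> nat list \<Rightarrow> nat list list set" where
  "row_tabs N nu = {P. ssyt_rows P \<and> map length P = nu \<and> set (concat P) \<subseteq> {1..N}}"

definition ssyts :: "nat \<Rightarrow> nat list \<Rightarrow> (nat \<times> nat \<Rightarrow> nat) set" where
  "ssyts N nu = {T. ssyt nu T \<and> (\<forall>p\<in>cells nu. T p \<le> N)}"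

lemma cells_map_length: "(r, c) \<in> cells (map length P) \<longleftrightarrow> r < length P \<and> c < length (P ! r)"
  by (auto simp: cells_mem)

lemma entry_in_concat: "r < length P \<Longrightarrow> c < length (P ! r) \<Longrightarrow> P ! r ! c \<in> set (concat P)"
  using nth_mem[of r P] nth_mem[of c "P ! r"] by (auto intro!: bexI[of _ "P ! r"])

lemma tab_of_rows_ssyts: "P \<in> row_tabs N nu \<Longrightarrow> tab_of_rows P \<in> ssyts N nu"
proof -
  assume P: "P \<in> row_tabs N nu"
  then have s: "ssyt_rows P" and nu: "nu = map length P" and e: "set (concat P) \<subseteq> {1..N}" by (auto simp: row_tabs_def)
  from s have rs: "\<And>r. r < length P \<Longrightarrow> sorted (P ! r)"
    and ab: "\<And>r. Suc r < length P \<Longrightarrow> col_strict (P ! r) (P ! Suc r)" by (auto simp: ssyt_rows_iff)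
  have ent: "\<And>r c. r < length P \<Longrightarrow> c < length (P ! r) \<Longrightarrow> 1 \<le> P ! r ! c \<and> P ! r ! c \<le> N"
    using e entry_in_concat by fastforce
  show ?thesis
    unfolding ssyts_def ssyt_def nu
  proof (intro CollectI conjI allI impI ballI)
    fix p assume "p \<notin> cells (map length P)"
    then show "tab_of_rows P p = 0" by (cases p) (auto simp: tab_of_rows_def cells_map_length)
  next
    fix p assume "p \<in> cells (map length P)"
    then show "1 \<le> tab_of_rows P p" using ent by (cases p) (auto simp: tab_of_rows_def cells_map_length)
  next
    fix r c assume "(r, c) \<in> cells (map length P) \<and> (r, Suc c) \<in> cells (map length P)"
    then show "tab_of_rows P (r, c) \<le> tab_of_rows P (r, Suc c)"
      using rs by (auto simp: tab_of_rows_def cells_map_length sorted_iff_nth_mono)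
  next
    fix r c assume a: "(r, c) \<in> cells (map length P) \<and> (Suc r, c) \<in> cells (map length P)"
    then have "col_strict (P ! r) (P ! Suc r)" using ab by (simp add: cells_map_length)
    then show "tab_of_rows P (r, c) < tab_of_rows P (Suc r, c)"
      using a by (auto simp: tab_of_rows_def cells_map_length col_strict_def)
  next
    fix p assume "p \<in> cells (map length P)"
    then show "tab_of_rows P p \<le> N" using ent by (cases p) (auto simp: tab_of_rows_def cells_map_length)
  qed
qed

lemma length_rows_of_tab: "length (rows_of_tab nu T) = length nu"
  by (simp add: rows_of_tab_def)

lemma nth_rows_of_tab: "r < length nu \<Longrightarrow> rows_of_tab nu T ! r = map (\<lambda>c. T (r, c)) [0..<nu ! r]"
  by (simp add: rows_of_tab_def)

lemma map_length_rows_of_tab: "map length (rows_of_tab nu T) = nu"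
  by (simp add: list_eq_iff_nth_eq length_rows_of_tab nth_rows_of_tab)

lemma set_concat_rows_of_tab: "set (concat (rows_of_tab nu T)) = T ` cells nu"
proof (intro equalityI subsetI)
  fix y assume "y \<in> set (concat (rows_of_tab nu T))"
  then obtain r where "r < length nu" "y \<in> set (rows_of_tab nu T ! r)"
    by (auto simp: set_concat in_set_conv_nth[of _ "rows_of_tab nu T"] length_rows_of_tab)
  then show "y \<in> T ` cells nu" by (auto simp: nth_rows_of_tab cells_mem)
next
  fix y assume "y \<in> T ` cells nu"
  then obtain r c where rc: "r < length nu" "c < nu ! r" "y = T (r, c)" by (auto simp: cells_mem)
  then have "y \<in> set (rows_of_tab nu T ! r)" by (simp add: nth_rows_of_tab)
  then show "y \<in> set (concat (rows_of_tab nu T))"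
    using nth_mem[of r "rows_of_tab nu T"] rc(1) by (auto simp: length_rows_of_tab)
qed

lemma ssyt_rows_rows_of_tab:
  assumes pa: "is_partition nu" and T: "ssyt_on (cells nu) T"
  shows "ssyt_rows (rows_of_tab nu T)"
  unfolding ssyt_rows_iff length_rows_of_tab
proof (intro conjI allI impI)
  fix r assume r: "r < length nu"
  show "rows_of_tab nu T ! r \<noteq> []" using partition_nth_pos[OF pa r] r by (simp add: nth_rows_of_tab)
  show "sorted (rows_of_tab nu T ! r)"
    using ssyt_row_mono[OF T] r by (auto simp: nth_rows_of_tab sorted_iff_nth_mono cells_mem)
next
  fix r assume r: "Suc r < length nu"
  have "T (r, i) < T (Suc r, i)" if "i < nu ! Suc r" for i
    using T cells_down[OF pa, of "Suc r" i r] r that unfolding ssyt_on_def by (auto simp: cells_mem)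
  then show "col_strict (rows_of_tab nu T ! r) (rows_of_tab nu T ! Suc r)"
    using partition_nth_antimono[OF pa, of r "Suc r"] r by (simp add: col_strict_def nth_rows_of_tab)
qed

lemma rows_of_tab_row_tabs: "is_partition nu \<Longrightarrow> T \<in> ssyts N nu \<Longrightarrow> rows_of_tab nu T \<in> row_tabs N nu"
  using ssyt_rows_rows_of_tab map_length_rows_of_tab set_concat_rows_of_tab
  by (fastforce simp: row_tabs_def ssyts_def ssyt_iff_ssyt_on ssyt_on_def)

lemma rows_of_tab_of_rows: "map length P = nu \<Longrightarrow> rows_of_tab nu (tab_of_rows P) = P"
proof -
  assume nu: "map length P = nu"
  show ?thesis
  proof (rule nth_equalityI)
    show "length (rows_of_tab nu (tab_of_rows P)) = length P" using nu by (auto simp: rows_of_tab_def)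
    fix r assume "r < length (rows_of_tab nu (tab_of_rows P))"
    then have r: "r < length P" using nu by (auto simp: rows_of_tab_def)
    then have nr: "nu ! r = length (P ! r)" using nu by auto
    show "rows_of_tab nu (tab_of_rows P) ! r = P ! r"
      using r nu nr by (auto simp: rows_of_tab_def tab_of_rows_def intro: nth_equalityI)
  qed
qed

lemma tab_of_rows_of_tab: "T \<in> ssyts N nu \<Longrightarrow> tab_of_rows (rows_of_tab nu T) = T"
proof (rule ext)
  fix p :: "nat \<times> nat" assume T: "T \<in> ssyts N nu"
  then have off: "\<And>p. p \<notin> cells nu \<Longrightarrow> T p = 0" by (auto simp: ssyts_def ssyt_def)
  obtain r c where p: "p = (r, c)" by fastforce
  show "tab_of_rows (rows_of_tab nu T) p = T p"
  proof (cases "r < length nu \<and> c < nu ! r")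
    case True then show ?thesis using p by (simp add: tab_of_rows_def rows_of_tab_def)
  next
    case False
    then have "p \<notin> cells nu" using p by (simp add: cells_mem)
    then show ?thesis using off False p by (auto simp: tab_of_rows_def rows_of_tab_def)
  qed
qed

lemma bij_tab_of_rows: "is_partition nu \<Longrightarrow> bij_betw tab_of_rows (row_tabs N nu) (ssyts N nu)"
proof (rule bij_betw_byWitness[where f' = "rows_of_tab nu"])
  assume pa: "is_partition nu"
  show "\<forall>a\<in>row_tabs N nu. rows_of_tab nu (tab_of_rows a) = a" using rows_of_tab_of_rows by (auto simp: row_tabs_def)
  show "\<forall>a'\<in>ssyts N nu. tab_of_rows (rows_of_tab nu a') = a'" using tab_of_rows_of_tab by blast
  show "tab_of_rows ` row_tabs N nu \<subseteq> ssyts N nu" using tab_of_rows_ssyts by blast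
  show "rows_of_tab nu ` ssyts N nu \<subseteq> row_tabs N nu" using rows_of_tab_row_tabs[OF pa] by blast
qed

lemma cells_Cons_map: "cells (map length (r # P)) =
   (\<lambda>c. (0, c)) ` {..<length r} \<union> (\<lambda>(i, c). (Suc i, c)) ` cells (map length P)"
proof (rule set_eqI)
  fix p :: "nat \<times> nat"
  obtain a c where p: "p = (a, c)" by fastforce
  show "p \<in> cells (map length (r # P)) \<longleftrightarrow> p \<in> (\<lambda>c. (0, c)) ` {..<length r} \<union> (\<lambda>(i, c). (Suc i, c)) ` cells (map length P)"
  proof (cases a)
    case 0 then show ?thesis using p by (auto simp: cells_mem)
  next
    case (Suc i)
    have "(Suc i, c) \<in> (\<lambda>(i, c). (Suc i, c)) ` cells (map length P) \<longleftrightarrow> (i, c) \<in> cells (map length P)"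
      by force
    then show ?thesis using p Suc by (auto simp: cells_mem)
  qed
qed

lemma prod_cells_tab_of_rows: "(\<Prod>p\<in>cells (map length P). x (tab_of_rows P p)) = prod_list (map x (concat P))"
proof (induction P)
  case Nil then show ?case by (simp add: cells_def)
next
  case (Cons r P)
  let ?A = "(\<lambda>c. (0::nat, c)) ` {..<length r}" and ?B = "(\<lambda>(i, c). (Suc i, c)) ` cells (map length P)"
  have d: "?A \<inter> ?B = {}" by auto
  have fA: "finite ?A" by simp
  have fB: "finite ?B" using finite_cells[of "map length P"] by simp
  have "(\<Prod>p\<in>cells (map length (r # P)). x (tab_of_rows (r # P) p)) =
        (\<Prod>p\<in>?A. x (tab_of_rows (r # P) p)) * (\<Prod>p\<in>?B. x (tab_of_rows (r # P) p))"
    unfolding cells_Cons_map by (rule prod.union_disjoint[OF fA fB d])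
  also have "(\<Prod>p\<in>?A. x (tab_of_rows (r # P) p)) = (\<Prod>c\<in>{..<length r}. x (tab_of_rows (r # P) (0, c)))"
    by (subst prod.reindex) (auto simp: inj_on_def)
  also have "\<dots> = (\<Prod>c\<in>{..<length r}. x (r ! c))"
    by (rule prod.cong) (auto simp: tab_of_rows_def)
  also have "\<dots> = prod_list (map x r)"
    by (simp add: prod.list_conv_set_nth atLeast0LessThan)
  also have "(\<Prod>p\<in>?B. x (tab_of_rows (r # P) p)) = (\<Prod>p\<in>cells (map length P). x (tab_of_rows (r # P) (Suc (fst p), snd p)))"
    by (subst prod.reindex) (auto simp: inj_on_def case_prod_beta)
  also have "\<dots> = (\<Prod>p\<in>cells (map length P). x (tab_of_rows P p))"
    by (rule prod.cong) (auto simp: tab_of_rows_def)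
  finally show ?case using Cons.IH by simp
qed

lemma schur_row_tabs: "is_partition nu \<Longrightarrow> schur N nu x = (\<Sum>P\<in>row_tabs N nu. prod_list (map x (concat P)))"
proof -
  assume pa: "is_partition nu"
  have "schur N nu x = (\<Sum>T\<in>ssyts N nu. \<Prod>p\<in>cells nu. x (T p))"
    by (simp add: schur_def ssyts_def)
  also have "\<dots> = (\<Sum>P\<in>row_tabs N nu. \<Prod>p\<in>cells nu. x (tab_of_rows P p))"
    by (rule sum.reindex_bij_betw[OF bij_tab_of_rows[OF pa], symmetric])
  also have "\<dots> = (\<Sum>P\<in>row_tabs N nu. prod_list (map x (concat P)))"
  proof (rule sum.cong)
    fix P assume "P \<in> row_tabs N nu"
    then have "nu = map length P" by (simp add: row_tabs_def)
    then show "(\<Prod>p\<in>cells nu. x (tab_of_rows P p)) = prod_list (map x (concat P))" using prod_cells_tab_of_rows by simp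
  qed simp
  finally show ?thesis .
qed

section \<open>Both sides as sums over all words\<close>

definition des_weight :: "'a::comm_ring_1 \<Rightarrow> 'a \<Rightarrow> nat set \<Rightarrow> 'a" where
  "des_weight q t D = q ^ (\<Sum>D) * t ^ card D"

definition all_words :: "nat \<Rightarrow> nat \<Rightarrow> nat list set" where
  "all_words n N = {v. length v = n \<and> set v \<subseteq> {1..N}}"

lemma finite_all_words: "finite (all_words n N)"
proof -
  have "all_words n N = {v. set v \<subseteq> {1..N} \<and> length v = n}" by (auto simp: all_words_def)
  then show ?thesis using finite_lists_length_eq[of "{1..N}" n] by simp
qed

lemma length_le_sum: "0 \<notin> set xs \<Longrightarrow> length xs \<le> sum_list (xs::nat list)"
  by (induction xs) auto

lemma finite_partitions: "finite (partitions n)"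
proof -
  have "partitions n \<subseteq> {xs. set xs \<subseteq> {0..n} \<and> length xs \<le> n}"
  proof
    fix nu assume "nu \<in> partitions n"
    then have s: "sum_list nu = n" and z: "0 \<notin> set nu" by (auto simp: partitions_def)
    have "set nu \<subseteq> {0..n}" using s member_le_sum_list[of _ nu] by auto
    moreover have "length nu \<le> n" using length_le_sum[OF z] s by simp
    ultimately show "nu \<in> {xs. set xs \<subseteq> {0..n} \<and> length xs \<le> n}" by simp
  qed
  moreover have "finite {xs. set xs \<subseteq> {0..n} \<and> length xs \<le> n}" by (rule finite_lists_length_le) simp
  ultimately show ?thesis by (rule finite_subset)
qed

lemma prod_list_mset:
  fixes x :: "'c \<Rightarrow> 'b::comm_monoid_mult"
  shows "mset u = mset v \<Longrightarrow> prod_list (map x u) = prod_list (map x v)"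
proof -
  assume e: "mset u = mset v"
  have "mset (map x u) = mset (map x v)" using e by (simp only: mset_map)
  then have "prod_mset (mset (map x u)) = prod_mset (mset (map x v))" by (rule arg_cong)
  then show ?thesis by (simp only: prod_mset_prod_list)
qed

definition rsk_pairs :: "nat \<Rightarrow> nat \<Rightarrow> (nat list list \<times> nat list) set" where
  "rsk_pairs n N = {(P, rho). ssyt_rows P \<and> set (concat P) \<subseteq> {1..N} \<and> yamanouchi rho \<and> rec_shape rho = map length P \<and> length rho = n}"

lemma rsk_in_rsk_pairs_iff: "rsk v \<in> rsk_pairs n N \<longleftrightarrow> v \<in> all_words n N"
proof -
  obtain P rho where r: "rsk v = (P, rho)" by fastforce
  then show ?thesis
    using rsk_invariants[OF r] mset_eq_setD[of "concat P" v] by (auto simp: rsk_pairs_def all_words_def)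
qed

lemma bij_rsk: "bij_betw rsk (all_words n N) (rsk_pairs n N)"
proof -
  have "z \<in> rsk ` all_words n N" if z: "z \<in> rsk_pairs n N" for z
  proof -
    obtain P rho where "z = (P, rho)" "ssyt_rows P" "yamanouchi rho" "rec_shape rho = map length P"
      using z unfolding rsk_pairs_def by blast
    then obtain v where "rsk v = z" using rsk_surj by blast
    then show ?thesis using z rsk_in_rsk_pairs_iff by blast
  qed
  then show ?thesis using rsk_inj rsk_in_rsk_pairs_iff unfolding bij_betw_def inj_on_def by auto
qed

lemma sum_all_words_rsk:
  fixes f :: "nat set \<Rightarrow> 'a::comm_semiring_1" and x :: "nat \<Rightarrow> 'a"
  shows "(\<Sum>v\<in>all_words n N. f (Des_wrt (>) (rev v)) * prod_list (map x v))
    = (\<Sum>(P, rho)\<in>rsk_pairs n N. f (Des_wrt (<) (rev rho)) * prod_list (map x (concat P)))"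
proof -
  have "f (Des_wrt (>) (rev v)) * prod_list (map x v)
      = (\<lambda>(P, rho). f (Des_wrt (<) (rev rho)) * prod_list (map x (concat P))) (rsk v)" for v
  proof -
    obtain P rho where r: "rsk v = (P, rho)" by fastforce
    then show ?thesis using Des_rsk[OF r] rsk_invariants[OF r] prod_list_mset[of "concat P" v x] by simp
  qed
  then show ?thesis by (simp add: sum.reindex_bij_betw[OF bij_rsk, symmetric])
qed

lemma sum_all_words_rev:
  fixes f :: "nat set \<Rightarrow> 'a::comm_semiring_1" and x :: "nat \<Rightarrow> 'a"
  shows "(\<Sum>w\<in>all_words n N. f (word_Des w) * prod_list (map x w))
    = (\<Sum>v\<in>all_words n N. f (Des_wrt (>) (rev v)) * prod_list (map x v))"
proof -
  have "bij_betw rev (all_words n N) (all_words n N)"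
    by (rule bij_betw_byWitness[where f' = rev]) (auto simp: all_words_def)
  then have "(\<Sum>w\<in>all_words n N. f (word_Des w) * prod_list (map x w))
      = (\<Sum>v\<in>all_words n N. f (word_Des (rev v)) * prod_list (map x (rev v)))"
    by (rule sum.reindex_bij_betw[symmetric])
  moreover have "prod_list (map x (rev v)) = prod_list (map x v)" for v by (rule prod_list_mset) simp
  ultimately show ?thesis by (simp add: word_Des_eq_Des_wrt)
qed

definition rec_words :: "nat list \<Rightarrow> nat list set" where
  "rec_words nu = {rho. yamanouchi rho \<and> rec_shape rho = nu}"

lemma map_length_rsk_pairs: "z \<in> rsk_pairs n N \<Longrightarrow> map length (fst z) \<in> partitions n"
proof -
  assume "z \<in> rsk_pairs n N"
  then obtain P rho where "z = (P, rho)" "yamanouchi rho" "rec_shape rho = map length P" "length rho = n"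
    unfolding rsk_pairs_def by blast
  then show ?thesis using yamanouchi_rec_shape[of rho] by (simp add: partitions_iff)
qed

lemma rsk_pairs_of_shape: "nu \<in> partitions n \<Longrightarrow>
  {z \<in> rsk_pairs n N. map length (fst z) = nu} = row_tabs N nu \<times> rec_words nu"
  using yamanouchi_rec_shape ssyt_rows_shape
  by (auto simp: rsk_pairs_def row_tabs_def rec_words_def partitions_iff)

lemma sum_product_swap:
  fixes f :: "'b \<Rightarrow> 'a::comm_semiring_0"
  shows "(\<Sum>(P, rho)\<in>A \<times> B. f rho * g P) = (\<Sum>rho\<in>B. f rho) * (\<Sum>P\<in>A. g P)"
proof -
  have "(\<Sum>(P, rho)\<in>A \<times> B. f rho * g P) = (\<Sum>P\<in>A. \<Sum>rho\<in>B. f rho * g P)"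
    by (simp add: sum.cartesian_product)
  also have "\<dots> = (\<Sum>P\<in>A. (\<Sum>rho\<in>B. f rho) * g P)" by (simp add: sum_distrib_right)
  also have "\<dots> = (\<Sum>rho\<in>B. f rho) * (\<Sum>P\<in>A. g P)" by (simp add: sum_distrib_left)
  finally show ?thesis .
qed

lemma sum_rsk_pairs_by_shape:
  fixes f :: "nat list \<Rightarrow> 'a::comm_semiring_0"
  shows "(\<Sum>(P, rho)\<in>rsk_pairs n N. f rho * g P) = (\<Sum>nu\<in>partitions n. (\<Sum>rho\<in>rec_words nu. f rho) * (\<Sum>P\<in>row_tabs N nu. g P))"
proof -
  have "finite (rsk_pairs n N)" using bij_betw_finite[OF bij_rsk] finite_all_words by blast
  then have "(\<Sum>(P, rho)\<in>rsk_pairs n N. f rho * g P)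
      = (\<Sum>nu\<in>partitions n. \<Sum>(P, rho)\<in>{z \<in> rsk_pairs n N. map length (fst z) = nu}. f rho * g P)"
    using map_length_rsk_pairs by (intro sum.group[symmetric] finite_partitions) auto
  then show ?thesis by (simp add: rsk_pairs_of_shape sum_product_swap)
qed

lemma bij_qy_tab: "is_partition nu \<Longrightarrow> bij_betw qy_tab (rec_words nu) (QYT nu)"
  unfolding bij_betw_def inj_on_def rec_words_def QYT_def
  using qy_tab_inj qyt_qy_tab qy_tab_surj by fastforce

lemma sum_QYT_rec_words: "is_partition nu \<Longrightarrow>
  (\<Sum>T\<in>QYT nu. q ^ tab_maj nu T * t ^ tab_des nu T) = (\<Sum>rho\<in>rec_words nu. des_weight q t (Des_wrt (<) (rev rho)))"
proof -
  assume pa: "is_partition nu"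
  have "q ^ tab_maj nu (qy_tab rho) * t ^ tab_des nu (qy_tab rho) = des_weight q t (Des_wrt (<) (rev rho))"
    if "rho \<in> rec_words nu" for rho
    using that standardize_qy_tab syt_Des_std_tab
    by (auto simp: rec_words_def tab_maj_def tab_des_def des_weight_def)
  then show ?thesis by (simp add: sum.reindex_bij_betw[OF bij_qy_tab[OF pa], symmetric])
qed

lemma sum_all_words_eq_rhs:
  "(\<Sum>w\<in>all_words n N. des_weight q t (word_Des w) * prod_list (map x w))
   = (\<Sum>nu\<in>partitions n. (\<Sum>T\<in>QYT nu. q ^ tab_maj nu T * t ^ tab_des nu T) * schur N nu x)"
proof -
  have "(\<Sum>w\<in>all_words n N. des_weight q t (word_Des w) * prod_list (map x w))
      = (\<Sum>(P, rho)\<in>rsk_pairs n N. des_weight q t (Des_wrt (<) (rev rho)) * prod_list (map x (concat P)))"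
    by (simp add: sum_all_words_rev sum_all_words_rsk)
  also have "\<dots> = (\<Sum>nu\<in>partitions n. (\<Sum>T\<in>QYT nu. q ^ tab_maj nu T * t ^ tab_des nu T) * schur N nu x)"
    by (simp add: sum_rsk_pairs_by_shape sum_QYT_rec_words schur_row_tabs partitions_iff)
  finally show ?thesis .
qed

section \<open>The left-hand side\<close>

definition content_list :: "nat \<Rightarrow> (nat \<Rightarrow> nat) \<Rightarrow> nat list" where
  "content_list N \<alpha> = map \<alpha> [1..<Suc N]"

definition exponents :: "nat \<Rightarrow> nat list \<Rightarrow> (nat \<Rightarrow> nat) set" where
  "exponents N lam = {\<alpha>. (\<forall>i. i \<notin> {1..N} \<longrightarrow> \<alpha> i = 0) \<and> mset (filter (\<lambda>k. k \<noteq> 0) (content_list N \<alpha>)) = mset lam}"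

definition content_partition :: "nat \<Rightarrow> nat list \<Rightarrow> nat list" where
  "content_partition N w = rev (sort (filter (\<lambda>k. k \<noteq> 0) (content_list N (count_list w))))"

lemma monomial_sym_exponents: "monomial_sym N lam x = (\<Sum>\<alpha>\<in>exponents N lam. \<Prod>i\<in>{1..N}. x i ^ \<alpha> i)"
  by (simp add: monomial_sym_def exponents_def content_list_def)

lemma words_iff_count:
  "w \<in> words c \<longleftrightarrow> (\<forall>i. count_list w i = (if i \<in> {1..length c} then c ! (i - 1) else 0))"
proof
  assume w: "w \<in> words c"
  show "\<forall>i. count_list w i = (if i \<in> {1..length c} then c ! (i - 1) else 0)"
  proof
    fix i
    show "count_list w i = (if i \<in> {1..length c} then c ! (i - 1) else 0)"
    proof (cases "i \<in> {1..length c}")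
      case True
      then obtain j where "i = Suc j" "j < length c" by (cases i) auto
      then show ?thesis using w by (simp add: words_def)
    next
      case False
      then have "i \<notin> set w" using w by (auto simp: words_def)
      then show ?thesis using False by auto
    qed
  qed
next
  assume cnt: "\<forall>i. count_list w i = (if i \<in> {1..length c} then c ! (i - 1) else 0)"
  have set: "set w \<subseteq> {1..length c}" using cnt by (metis count_list_0_iff subsetI)
  have "length w = (\<Sum>i = 1..length c. count_list w i)" using sum_count_set[OF set] by simp
  also have "\<dots> = (\<Sum>i<length c. c ! i)" using cnt by (simp add: sum.atLeast1_atMost_eq)
  finally show "w \<in> words c" using set cnt by (simp add: words_def sum_list_sum_nth atLeast0LessThan)
qed

lemma words_pad_zeros: "words (lam @ replicate k 0) = words lam"
  by (auto simp: words_iff_count nth_append)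

lemma mset_content_list:
  assumes "\<alpha> \<in> exponents N lam"
  shows "mset (content_list N \<alpha>) = mset (lam @ replicate (N - length lam) 0)"
proof -
  let ?M = "mset (content_list N \<alpha>)"
  have nz: "filter_mset (\<lambda>k. k \<noteq> 0) ?M = mset lam" using assms by (simp add: exponents_def)
  have "?M = filter_mset (\<lambda>k. k \<noteq> 0) ?M + filter_mset (\<lambda>k. k = 0) ?M"
    using multiset_partition[of ?M "\<lambda>k. k \<noteq> 0"] by simp
  also have "filter_mset (\<lambda>k. k = 0) ?M = replicate_mset (count ?M 0) 0"
    by (rule filter_eq_replicate_mset)
  finally have M: "?M = mset lam + replicate_mset (count ?M 0) 0" unfolding nz .
  moreover have "size ?M = N" by (simp add: content_list_def)
  ultimately have "count ?M 0 = N - length lam" by (metis add_diff_cancel_left' size_mset size_replicate_mset size_union)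
  then show ?thesis using M by simp
qed

lemma sum_words_content_list: "\<alpha> \<in> exponents N lam \<Longrightarrow>
  (\<Sum>w\<in>words (content_list N \<alpha>). f (word_Des w)) = (\<Sum>w\<in>words lam. f (word_Des w))"
  using sum_words_perm[OF mset_content_list, of \<alpha> N lam f] words_pad_zeros by simp

lemma all_words_of_content:
  assumes "lam \<in> partitions n" "\<alpha> \<in> exponents N lam"
  shows "{w \<in> all_words n N. count_list w = \<alpha>} = words (content_list N \<alpha>)"
proof -
  have zero: "\<alpha> i = 0" if "i \<notin> {1..N}" for i using assms(2) that by (simp add: exponents_def)
  have "sum_list (content_list N \<alpha>) = sum_list lam"
    using arg_cong[OF mset_content_list[OF assms(2)], of sum_mset] by (simp add: sum_mset_sum_list)
  then have sum: "sum_list (content_list N \<alpha>) = n" using assms(1) by (simp add: partitions_def)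
  have "(if i \<in> {1..length (content_list N \<alpha>)} then content_list N \<alpha> ! (i - 1) else 0) = \<alpha> i" for i
    using zero[of i] by (cases i) (auto simp: content_list_def nth_upt simp del: upt_Suc)
  then have count: "w \<in> words (content_list N \<alpha>) \<longleftrightarrow> count_list w = \<alpha>" for w
    unfolding words_iff_count fun_eq_iff by simp
  show ?thesis
  proof (intro set_eqI iffI)
    fix w assume "w \<in> {w \<in> all_words n N. count_list w = \<alpha>}"
    then show "w \<in> words (content_list N \<alpha>)" using count by blast
  next
    fix w assume w: "w \<in> words (content_list N \<alpha>)"
    then have "w \<in> all_words n N" using sum by (simp add: words_def all_words_def content_list_def del: upt_Suc)
    then show "w \<in> {w \<in> all_words n N. count_list w = \<alpha>}" using w count by blast
  qed
qed

lemma prod_list_count: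
  fixes w :: "nat list" and N :: nat and x :: "nat \<Rightarrow> 'a::comm_monoid_mult"
  shows "set w \<subseteq> {1..N} \<Longrightarrow> prod_list (map x w) = (\<Prod>i\<in>{1..N}. x i ^ count_list w i)"
proof (induction w)
  case Nil then show ?case by simp
next
  case (Cons a w)
  then have a: "a \<in> {1..N}" and IH: "prod_list (map x w) = (\<Prod>i\<in>{1..N}. x i ^ count_list w i)" by auto
  have "(\<Prod>i\<in>{1..N}. x i ^ count_list (a # w) i) = (\<Prod>i\<in>{1..N}. x i ^ count_list w i * (if a = i then x i else 1))"
    by (rule prod.cong) (auto simp: mult.commute)
  also have "\<dots> = (\<Prod>i\<in>{1..N}. x i ^ count_list w i) * (\<Prod>i\<in>{1..N}. if a = i then x i else 1)"
    by (rule prod.distrib)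
  also have "(\<Prod>i\<in>{1..N}. if a = i then x i else 1) = (if a \<in> {1..N} then x a else 1)"
    by (rule prod.delta') simp
  also have "\<dots> = x a" using a by simp
  finally show ?case using IH by (simp add: mult.commute)
qed

lemma sum_words_of_content:
  fixes f :: "nat set \<Rightarrow> 'a::comm_semiring_1" and x :: "nat \<Rightarrow> 'a"
  assumes "lam \<in> partitions n" "\<alpha> \<in> exponents N lam"
  shows "(\<Sum>w\<in>{w \<in> all_words n N. count_list w = \<alpha>}. f (word_Des w) * prod_list (map x w))
    = (\<Sum>w\<in>words lam. f (word_Des w)) * (\<Prod>i\<in>{1..N}. x i ^ \<alpha> i)"
proof -
  let ?S = "{w \<in> all_words n N. count_list w = \<alpha>}"
  have "(\<Sum>w\<in>?S. f (word_Des w) * prod_list (map x w)) = (\<Sum>w\<in>?S. f (word_Des w) * (\<Prod>i\<in>{1..N}. x i ^ \<alpha> i))"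
    using prod_list_count[of _ N x] by (intro sum.cong) (auto simp: all_words_def)
  also have "\<dots> = (\<Sum>w\<in>?S. f (word_Des w)) * (\<Prod>i\<in>{1..N}. x i ^ \<alpha> i)"
    by (rule sum_distrib_right[symmetric])
  finally show ?thesis using all_words_of_content[OF assms] sum_words_content_list[OF assms(2), of f] by simp
qed

lemma sum_list_filter_nonzero: "sum_list (filter (\<lambda>k. k \<noteq> 0) xs) = sum_list (xs :: nat list)"
  by (induction xs) auto

lemma content_partition_partitions: "w \<in> all_words n N \<Longrightarrow> content_partition N w \<in> partitions n"
proof -
  assume w: "w \<in> all_words n N"
  have "sum_list (content_list N (count_list w)) = sum (count_list w) {1..N}"
    by (simp add: content_list_def interv_sum_list_conv_sum_set_nat atLeastLessThanSuc_atLeastAtMost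
        del: upt_Suc)
  also have "\<dots> = n" using w sum_count_set[of w "{1..N}"] by (simp add: all_words_def)
  moreover have "mset (content_partition N w) = mset (filter (\<lambda>k. k \<noteq> 0) (content_list N (count_list w)))"
    by (simp add: content_partition_def)
  ultimately have "sum_list (content_partition N w) = n"
    by (metis sum_list_filter_nonzero sum_mset_sum_list)
  then show ?thesis by (simp add: partitions_def content_partition_def sorted_wrt_rev)
qed

lemma count_list_exponents: "w \<in> all_words n N \<Longrightarrow> count_list w \<in> exponents N (content_partition N w)"
proof -
  assume "w \<in> all_words n N"
  then have "i \<notin> set w" if "i \<notin> {1..N}" for i using that by (auto simp: all_words_def)
  then show ?thesis by (simp add: exponents_def content_partition_def)
qed

lemma content_partition_eq:
  assumes "lam \<in> partitions n" "count_list w \<in> exponents N lam"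
  shows "content_partition N w = lam"
proof -
  let ?xs = "filter (\<lambda>k. k \<noteq> 0) (content_list N (count_list w))"
  have "mset (rev lam) = mset ?xs" "sorted (rev lam)"
    using assms by (simp_all add: exponents_def partitions_def sorted_wrt_rev)
  then have "sort ?xs = rev lam" using properties_for_sort by metis
  then show ?thesis by (simp add: content_partition_def)
qed

lemma exponents_le: "lam \<in> partitions n \<Longrightarrow> \<alpha> \<in> exponents N lam \<Longrightarrow> \<alpha> i \<le> n"
proof (cases "\<alpha> i = 0")
  case False
  assume l: "lam \<in> partitions n" and a: "\<alpha> \<in> exponents N lam"
  then have i: "i \<in> {1..N}" using False by (auto simp: exponents_def)
  then have "\<alpha> i \<in> set (filter (\<lambda>k. k \<noteq> 0) (content_list N \<alpha>))"
    using False by (auto simp: content_list_def simp del: upt_Suc)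
  also have "set (filter (\<lambda>k. k \<noteq> 0) (content_list N \<alpha>)) = set lam"
    using a by (metis (mono_tags, lifting) exponents_def mem_Collect_eq set_mset_mset)
  finally have "\<alpha> i \<in> set lam" .
  then have "\<alpha> i \<le> sum_list lam" using member_le_sum_list[of "\<alpha> i" lam] by simp
  then show ?thesis using l by (simp add: partitions_def)
qed simp

lemma finite_exponents: "lam \<in> partitions n \<Longrightarrow> finite (exponents N lam)"
proof -
  assume l: "lam \<in> partitions n"
  have inj: "inj_on (content_list N) (exponents N lam)"
  proof (rule inj_onI)
    fix \<alpha> \<beta> assume a: "\<alpha> \<in> exponents N lam" "\<beta> \<in> exponents N lam" and e: "content_list N \<alpha> = content_list N \<beta>"
    show "\<alpha> = \<beta>"
    proof
      fix i show "\<alpha> i = \<beta> i"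
      proof (cases "i \<in> {1..N}")
        case True
        then obtain j where j: "i = Suc j" "j < N" by (cases i) auto
        have "content_list N \<alpha> ! j = content_list N \<beta> ! j" using e by simp
        then show ?thesis using j by (simp add: content_list_def del: upt_Suc)
      next
        case False then show ?thesis using a by (simp add: exponents_def)
      qed
    qed
  qed
  have "content_list N ` exponents N lam \<subseteq> {xs. set xs \<subseteq> {0..n} \<and> length xs = N}"
    using exponents_le[OF l] by (auto simp: content_list_def)
  then have "finite (content_list N ` exponents N lam)"
    by (rule finite_subset) (rule finite_lists_length_eq, simp)
  then show ?thesis using finite_imageD inj by blast
qed

lemma lhs_eq_sum_all_words: "(\<Sum>lam\<in>partitions n. (\<Sum>w\<in>words lam. q ^ word_maj w * t ^ word_des w) * monomial_sym N lam x)
   = (\<Sum>w\<in>all_words n N. des_weight q t (word_Des w) * prod_list (map x w))"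
proof -
  let ?G = "\<lambda>w. des_weight q t (word_Des w) * prod_list (map x w)"
  have A: "\<And>lam. (\<Sum>w\<in>words lam. q ^ word_maj w * t ^ word_des w) = (\<Sum>w\<in>words lam. des_weight q t (word_Des w))"
    by (simp add: word_maj_def word_des_def des_weight_def)
  have "(\<Sum>lam\<in>partitions n. (\<Sum>w\<in>words lam. q ^ word_maj w * t ^ word_des w) * monomial_sym N lam x)
     = (\<Sum>lam\<in>partitions n. \<Sum>\<alpha>\<in>exponents N lam. (\<Sum>w\<in>words lam. des_weight q t (word_Des w)) * (\<Prod>i\<in>{1..N}. x i ^ \<alpha> i))"
    by (simp add: A monomial_sym_exponents sum_distrib_left)
  also have "\<dots> = (\<Sum>lam\<in>partitions n. \<Sum>\<alpha>\<in>exponents N lam. \<Sum>w\<in>{w \<in> all_words n N. count_list w = \<alpha>}. ?G w)"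
    by (intro sum.cong refl) (rule sum_words_of_content[symmetric])
  also have "\<dots> = (\<Sum>lam\<in>partitions n. \<Sum>w\<in>{w \<in> all_words n N. content_partition N w = lam}. ?G w)"
  proof (rule sum.cong[OF refl])
    fix lam assume l: "lam \<in> partitions n"
    let ?S = "{w \<in> all_words n N. content_partition N w = lam}"
    have fS: "finite ?S" using finite_all_words by simp
    have im: "count_list ` ?S \<subseteq> exponents N lam" using count_list_exponents by auto
    have "(\<Sum>\<alpha>\<in>exponents N lam. \<Sum>w\<in>{w \<in> ?S. count_list w = \<alpha>}. ?G w) = (\<Sum>w\<in>?S. ?G w)"
      by (rule sum.group[OF fS finite_exponents[OF l] im])
    moreover have "\<And>\<alpha>. \<alpha> \<in> exponents N lam \<Longrightarrow> {w \<in> ?S. count_list w = \<alpha>} = {w \<in> all_words n N. count_list w = \<alpha>}"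
      using content_partition_eq[OF l] by auto
    ultimately show "(\<Sum>\<alpha>\<in>exponents N lam. \<Sum>w\<in>{w \<in> all_words n N. count_list w = \<alpha>}. ?G w) = (\<Sum>w\<in>?S. ?G w)"
      by simp
  qed
  also have "\<dots> = (\<Sum>w\<in>all_words n N. ?G w)"
  proof (rule sum.group[OF finite_all_words finite_partitions])
    show "content_partition N ` all_words n N \<subseteq> partitions n" using content_partition_partitions by blast
  qed
  finally show ?thesis .
qed

theorem mainTheorem10:
  fixes n N :: nat and q t :: "'a::comm_ring_1" and x :: "nat \<Rightarrow> 'a"
  shows "(\<Sum>lam\<in>partitions n. (\<Sum>w\<in>words lam. q ^ word_maj w * t ^ word_des w)
             * monomial_sym N lam x)
       = (\<Sum>nu\<in>partitions n. (\<Sum>T\<in>QYT nu. q ^ tab_maj nu T * t ^ tab_des nu T)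
             * schur N nu x)"
  unfolding lhs_eq_sum_all_words by (rule sum_all_words_eq_rhs)

end
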